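(* For multi-indices $\alpha,\beta$ there is $C=C(\alpha,\beta,\iota,\Omega)$ such that for every smooth function $f$ on $\Omega$ and $k=1,2,3$, $$\Big|\partial^\alpha\bar\partial^\beta\big(\sigma^{-\iota}\partial_k(\sigma^{\iota+1}f)\big)-\sigma^{-\iota-|\alpha|}\partial_k\big(\sigma^{\iota+|\alpha|+1}\partial^\alpha\bar\partial^\beta f\big)\Big|\le C\sum_{0\le j\le|\beta|-1}\Big(\sigma|\partial^{|\alpha|+1}\bar\partial^jf|+|\partial^{|\alpha|}\bar\partial^jf|\Big)+C|\alpha|\sum_{0\le j\le|\beta|+1}|\partial^{|\alpha|-1}\bar\partial^jf| .$$
   Context: $\iota>0$ is a fixed real number ($\iota=1/(\gamma-1)$, $\gamma>1$). $\underline A,\underline B>0$, $\Omega\subset\mathbb R^3$ is the open ball centered at $0$ of radius $\sqrt{\underline A/\underline B}$, $\sigma(y)=\underline A-\underline B|y|^2$. $\partial_k=\partial/\partial y_k$; $\bar\partial_i=\epsilon^{ijk}y_j\partial_k$; $\partial^\alpha,\bar\partial^\beta$ multi-index powers; for integers $a,b\ge0$, $|\partial^a\bar\partial^bf|=\sum_{|\alpha'|=a,|\beta'|=b}|\partial^{\alpha'}\bar\partial^{\beta'}f|$ (empty sums are $0$). *)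

theory Defs
  imports "HOL-Analysis.Analysis"
begin

definition pd :: "3 \<Rightarrow> (real^3 \<Rightarrow> real) \<Rightarrow> real^3 \<Rightarrow> real" where
  "pd k f y = deriv (\<lambda>t. f (y + t *\<^sub>R axis k 1)) 0"

definition levi :: "3 \<Rightarrow> 3 \<Rightarrow> 3 \<Rightarrow> real" where
  "levi i j k =
    (if (i,j,k) \<in> {(1,2,3),(2,3,1),(3,1,2)} then 1
     else if (i,j,k) \<in> {(1,3,2),(3,2,1),(2,1,3)} then -1 else 0)"

definition rd :: "3 \<Rightarrow> (real^3 \<Rightarrow> real) \<Rightarrow> real^3 \<Rightarrow> real" where
  "rd i f y = (\<Sum>j\<in>UNIV. \<Sum>k\<in>UNIV. levi i j k * y$j * pd k f y)"

fun pds :: "3 list \<Rightarrow> (real^3 \<Rightarrow> real) \<Rightarrow> real^3 \<Rightarrow> real" where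
  "pds [] f = f"
| "pds (k # ks) f = pd k (pds ks f)"

definition smooth_on :: "(real^3) set \<Rightarrow> (real^3 \<Rightarrow> real) \<Rightarrow> bool" where
  "smooth_on U f \<longleftrightarrow> (\<forall>ks. pds ks f differentiable_on U)"

definition mlen :: "(3 \<Rightarrow> nat) \<Rightarrow> nat" where
  "mlen \<alpha> = (\<Sum>i\<in>UNIV. \<alpha> i)"

definition dpow :: "(3 \<Rightarrow> nat) \<Rightarrow> (real^3 \<Rightarrow> real) \<Rightarrow> real^3 \<Rightarrow> real" where
  "dpow \<alpha> f = (pd 1 ^^ \<alpha> 1) ((pd 2 ^^ \<alpha> 2) ((pd 3 ^^ \<alpha> 3) f))"

definition rpow :: "(3 \<Rightarrow> nat) \<Rightarrow> (real^3 \<Rightarrow> real) \<Rightarrow> real^3 \<Rightarrow> real" where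
  "rpow \<beta> f = (rd 1 ^^ \<beta> 1) ((rd 2 ^^ \<beta> 2) ((rd 3 ^^ \<beta> 3) f))"

text \<open>|\<partial>^a \<bar>\<partial>^b f|(y): sum over all multi-indices of the given lengths\<close>
definition absD :: "nat \<Rightarrow> nat \<Rightarrow> (real^3 \<Rightarrow> real) \<Rightarrow> real^3 \<Rightarrow> real" where
  "absD a b f y = (\<Sum>\<alpha>\<in>{\<alpha>. mlen \<alpha> = a}. \<Sum>\<beta>\<in>{\<beta>. mlen \<beta> = b}. \<bar>dpow \<alpha> (rpow \<beta> f) y\<bar>)"

definition sig :: "real \<Rightarrow> real \<Rightarrow> real^3 \<Rightarrow> real" where
  "sig A B y = A - B * (norm y)^2"

end

theory Submission
  imports Defs "HOL-Library.FuncSet"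
begin

(* Write R_i = \<Sum>_jk \<epsilon>_ijk y_j \<partial>_k for the rotation fields and regard \<partial>_m and R_i as letters,
   so that \<partial>^\<alpha> R^\<beta> f is a word applied to f. The commutators [\<partial>_m, R_i] = \<Sum>_k
       \<epsilon>_imk \<partial>_k and
   [R_i, R_j] = -\<Sum>_l \<epsilon>_ijl R_l reorder every word into the canonical form \<partial>^a R^b, up to
       words with
   the same number of \<partial>'s and fewer R's; hence on the ball every word is bounded by the sums
   |\<partial>^p R^j f| with j below its number of R's.
   Since \<sigma>^-e \<partial>_k (\<sigma>^(e+1) g) = \<sigma> \<partial>_k g - 2B(e+1) y_k g and R_i \<sigma> =
       0, expanding the left operator
   by the Leibniz rule leaves, besides the leading term, only terms where \<partial>^\<alpha> hits \<sigma> or y_k.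
       When it
   hits \<sigma> once, the identity y_l \<partial>_k - y_k \<partial>_l = \<Sum>_i \<epsilon>_ilk R_i turns these
       terms into
   -2B|\<alpha>| y_k \<partial>^\<alpha> R^\<beta> f, which is exactly what the weight
       \<sigma>^(\<iota>+|\<alpha>|+1) accounts for; all remaining
   terms are commutators with one letter fewer, bounded since y and \<sigma> are bounded on the ball. *)

section \<open>Partial derivatives along the coordinate axes\<close>

abbreviation unit_vec :: "3 \<Rightarrow> real^3" where "unit_vec m \<equiv> axis m 1"

lemma has_real_derivative_along_line:
  assumes "(g has_derivative D) (at p)" and "p = q + s *\<^sub>R v"
  shows "((\<lambda>t. g (q + t *\<^sub>R v)) has_real_derivative D v) (at s)"
proof -
  have l: "((\<lambda>t. q + t *\<^sub>R v) has_derivative (\<lambda>t. t *\<^sub>R v)) (at s)"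
    by (auto intro!: derivative_eq_intros)
  have "((g \<circ> (\<lambda>t. q + t *\<^sub>R v)) has_derivative (D \<circ> (\<lambda>t. t *\<^sub>R v))) (at s)"
    using diff_chain_at[OF l] assms by simp
  moreover have "D \<circ> (\<lambda>t. t *\<^sub>R v) = (\<lambda>t. D v * t)"
    using has_derivative_linear[OF assms(1)] by (auto simp: linear_scale o_def)
  ultimately show ?thesis by (simp add: has_field_derivative_def o_def)
qed

lemma pd_eq_derivative: assumes "(g has_derivative D) (at p)" shows "pd m g p = D (unit_vec m)"
proof -
  have "((\<lambda>t. g (p + t *\<^sub>R unit_vec m)) has_real_derivative D (unit_vec m)) (at 0)"
    by (rule has_real_derivative_along_line[OF assms]) simp
  thus ?thesis unfolding pd_def by (rule DERIV_imp_deriv)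
qed

lemma pd_along_line:
  assumes "g differentiable (at (q + s *\<^sub>R unit_vec m))"
  shows "((\<lambda>t. g (q + t *\<^sub>R unit_vec m)) has_real_derivative pd m g (q + s *\<^sub>R unit_vec m)) (at s)"
proof -
  obtain D where D: "(g has_derivative D) (at (q + s *\<^sub>R unit_vec m))"
    using assms unfolding differentiable_def by blast
  show ?thesis using has_real_derivative_along_line[OF D refl] pd_eq_derivative[OF D] by simp
qed

lemma pd_has_real_derivative:
  assumes "g differentiable (at p)"
  shows "((\<lambda>t. g (p + t *\<^sub>R unit_vec m)) has_real_derivative pd m g p) (at 0)"
  using pd_along_line[of g p 0 m] assms by simp

lemma pd_add: "g differentiable (at p) \<Longrightarrow> h differentiable (at p) \<Longrightarrow>
   pd m (\<lambda>z. g z + h z) p = pd m g p + pd m h p"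
  unfolding pd_def[of m "\<lambda>z. g z + h z"]
  by (rule DERIV_imp_deriv, rule DERIV_add[OF pd_has_real_derivative pd_has_real_derivative])

lemma pd_mult: "g differentiable (at p) \<Longrightarrow> h differentiable (at p) \<Longrightarrow>
   pd m (\<lambda>z. g z * h z) p = pd m g p * h p + g p * pd m h p"
  unfolding pd_def[of m "\<lambda>z. g z * h z"]
  by (rule DERIV_imp_deriv, rule DERIV_mult[OF pd_has_real_derivative pd_has_real_derivative, THEN DERIV_cong]) auto

lemma pd_const[simp]: "pd m (\<lambda>z. c) = (\<lambda>z. 0)"
  unfolding pd_def by (simp add: fun_eq_iff)

lemma pd_coord[simp]: "pd m (\<lambda>z. z $ j) = (\<lambda>z. if m = j then 1 else 0)"
proof
  fix p
  have "((\<lambda>t. (p + t *\<^sub>R unit_vec m) $ j) has_real_derivative (if m = j then 1 else 0)) (at 0)"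
    by (auto simp: axis_def intro!: derivative_eq_intros)
  thus "pd m (\<lambda>z. z $ j) p = (if m = j then 1 else 0)"
    unfolding pd_def by (rule DERIV_imp_deriv)
qed

lemma pd_cong_open:
  assumes "open U" "p \<in> U" "\<And>z. z \<in> U \<Longrightarrow> g z = h z"
  shows "pd m g p = pd m h p"
proof -
  obtain e where e: "e > 0" "ball p e \<subseteq> U" using assms(1,2) open_contains_ball by blast
  have "eventually (\<lambda>t. g (p + t *\<^sub>R unit_vec m) = h (p + t *\<^sub>R unit_vec m)) (nhds 0)"
    unfolding eventually_nhds_metric
  proof (intro exI[of _ e] conjI allI impI)
    fix t :: real assume "dist t 0 < e"
    hence "p + t *\<^sub>R unit_vec m \<in> ball p e" by (simp add: dist_norm)
    thus "g (p + t *\<^sub>R unit_vec m) = h (p + t *\<^sub>R unit_vec m)" using e assms(3) by blast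
  qed (use e in auto)
  thus ?thesis unfolding pd_def by (rule deriv_cong_ev) simp
qed

lemma coord_differentiable[simp]: "(\<lambda>z::real^3. z$j) differentiable at p"
  by (rule bounded_linear_imp_differentiable) (rule bounded_linear_vec_nth)

lemma pd_cmult: "g differentiable (at p) \<Longrightarrow> pd m (\<lambda>z. c * g z) p = c * pd m g p"
  unfolding pd_def[of m "\<lambda>z. c * g z"]
  by (rule DERIV_imp_deriv, rule DERIV_cmult[OF pd_has_real_derivative])

lemma pd_sum: "(\<And>x. x \<in> S \<Longrightarrow> F x differentiable (at p)) \<Longrightarrow>
   pd m (\<lambda>z. \<Sum>x\<in>S. F x z) p = (\<Sum>x\<in>S. pd m (F x) p)"
  unfolding pd_def[of m "\<lambda>z. \<Sum>x\<in>S. F x z"]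
  by (rule DERIV_imp_deriv, rule DERIV_sum, rule pd_has_real_derivative) auto

lemma pds_append: "pds (ks @ ls) g = pds ks (pds ls g)"
  by (induction ks) auto

lemma smooth_on_differentiable_at: "open U \<Longrightarrow> smooth_on U g \<Longrightarrow> p \<in> U
    \<Longrightarrow> g differentiable (at p)"
  unfolding smooth_on_def using differentiable_on_eq_differentiable_at
  by (metis pds.simps(1))

lemma smooth_on_pd: "smooth_on U g \<Longrightarrow> smooth_on U (pd m g)"
  unfolding smooth_on_def
proof
  fix ks assume "\<forall>ks. pds ks g differentiable_on U"
  hence "pds (ks @ [m]) g differentiable_on U" by blast
  thus "pds ks (pd m g) differentiable_on U" by (simp add: pds_append)
qed

lemma pds_cong_open: "open U \<Longrightarrow> (\<And>z. z \<in> U \<Longrightarrow> g z = h z) \<Longrightarrow> z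
    \<in> U \<Longrightarrow> pds ks g z = pds ks h z"
proof (induction ks arbitrary: z)
  case (Cons k ks) thus ?case using pd_cong_open[of U z "pds ks g" "pds ks h" k] by simp
qed simp

lemma differentiable_on_cong_open: assumes "open U" "g differentiable_on U" "\<And>z. z \<in> U \<Longrightarrow> g
    z = h z"
  shows "h differentiable_on U"
  unfolding differentiable_on_eq_differentiable_at[OF assms(1)]
proof
  fix x assume x: "x \<in> U"
  have "g differentiable at x" using assms(1,2) x differentiable_on_eq_differentiable_at by blast
  then obtain D where "(g has_derivative D) (at x)" unfolding differentiable_def by blast
  hence "(h has_derivative D) (at x)" by (rule has_derivative_transform_within_open[OF _ assms(1) x assms(3)])
  thus "h differentiable at x" unfolding differentiable_def by blast
qed

lemma pds_add:
  assumes "open U" "\<And>ks'. length ks' < length ks \<Longrightarrow> pds ks' F differentiable_on U \<and> pds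
      ks' H differentiable_on U"
    "z \<in> U"
  shows "pds ks (\<lambda>z. F z + H z) z = pds ks F z + pds ks H z"
  using assms(2,3)
proof (induction ks arbitrary: z)
  case (Cons k ks)
  have a: "pds ks F differentiable_on U" "pds ks H differentiable_on U" using Cons.prems(1)[of ks] by auto
  have a2: "pds ks F differentiable at z" "pds ks H differentiable at z"
    using a Cons.prems(2) assms(1) differentiable_on_eq_differentiable_at by blast+
  have IH: "pds ks (\<lambda>z. F z + H z) x = pds ks F x + pds ks H x" if "x \<in> U" for x
    using Cons.IH Cons.prems(1) that by simp
  have "pds (k # ks) (\<lambda>z. F z + H z) z = pd k (\<lambda>z. pds ks F z + pds ks H z) z"
    using pd_cong_open[OF assms(1) Cons.prems(2) IH] by simp
  also have "\<dots> = pds (k # ks) F z + pds (k # ks) H z"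
    using pd_add[OF a2] by simp
  finally show ?case .
qed simp

lemma smooth_on_add: assumes "open U" "smooth_on U g" "smooth_on U h" shows "smooth_on U (\<lambda>z. g z + h z)"
  unfolding smooth_on_def
proof
  fix ks
  have d: "(\<lambda>z. pds ks g z + pds ks h z) differentiable_on U"
    using assms unfolding smooth_on_def by (intro differentiable_on_add) auto
  have "pds ks (\<lambda>z. g z + h z) z = pds ks g z + pds ks h z" if "z \<in> U" for z
    by (rule pds_add[OF assms(1) _ that]) (use assms(2,3) in \<open>auto simp: smooth_on_def\<close>)
  thus "pds ks (\<lambda>z. g z + h z) differentiable_on U"
    using differentiable_on_cong_open[OF assms(1) d] by simp
qed

lemma pds_const: "\<exists>c'. pds ks (\<lambda>z. c) = (\<lambda>z. c')"
  by (induction ks) auto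

lemma smooth_on_const: "smooth_on U (\<lambda>z. c)"
  unfolding smooth_on_def
proof
  fix ks
  obtain c' where "pds ks (\<lambda>z. c) = (\<lambda>z. c')" using pds_const by blast
  thus "pds ks (\<lambda>z. c) differentiable_on U" by simp
qed

lemma pds_coord: "(\<exists>c'. pds ks (\<lambda>z. z $ j) = (\<lambda>z. c')) \<or> pds ks (\<lambda>z. z $ j) =
    (\<lambda>z. z $ j)"
proof (induction ks)
  case (Cons k ks) thus ?case
  proof
    assume "\<exists>c'. pds ks (\<lambda>z. z $ j) = (\<lambda>z. c')" thus ?case by auto
  next
    assume "pds ks (\<lambda>z. z $ j) = (\<lambda>z. z $ j)"
    thus ?case by (cases "k = j") auto
  qed
qed simp

lemma smooth_on_coord: "smooth_on U (\<lambda>z. z $ j)"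
  unfolding smooth_on_def
proof
  fix ks
  have d: "(\<lambda>z::real^3. z $ j) differentiable_on U"
    by (rule bounded_linear_imp_differentiable_on) (rule bounded_linear_vec_nth)
  show "pds ks (\<lambda>z. z $ j) differentiable_on U"
    using pds_coord[of ks j]
  proof
    assume "\<exists>c'. pds ks (\<lambda>z. z $ j) = (\<lambda>z. c')"
    then obtain c' where "pds ks (\<lambda>z. z $ j) = (\<lambda>z. c')" by blast
    thus ?thesis by simp
  qed (use d in simp)
qed

lemma pds_mult_differentiable_on:
  assumes U: "open U"
  shows "length ks \<le> n \<Longrightarrow> smooth_on U g \<Longrightarrow> smooth_on U h \<Longrightarrow> pds ks
      (\<lambda>z. g z * h z) differentiable_on U"
proof (induction n arbitrary: ks g h)
  case 0
  hence "ks = []" by simp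
  thus ?case using 0 unfolding smooth_on_def by (metis differentiable_on_mult pds.simps(1))
next
  case (Suc n)
  show ?case
  proof (cases ks rule: rev_exhaust)
    case Nil thus ?thesis using Suc.prems unfolding smooth_on_def
      by (metis differentiable_on_mult pds.simps(1))
  next
    case (snoc ks0 m)
    have l: "length ks0 \<le> n" using Suc.prems snoc by simp
    have sg: "smooth_on U (pd m g)" "smooth_on U (pd m h)" using Suc.prems smooth_on_pd by auto
    have e1: "pd m (\<lambda>z. g z * h z) z = pd m g z * h z + g z * pd m h z" if "z \<in> U" for z
      using pd_mult smooth_on_differentiable_at[OF U] Suc.prems that by blast
    have e2: "pds ks0 (pd m (\<lambda>z. g z * h z)) z = pds ks0 (\<lambda>z. pd m g z * h z + g z * pd m h z) z"
      if "z \<in> U" for z using pds_cong_open[OF U e1 that] .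
    have e3: "pds ks0 (\<lambda>z. pd m g z * h z + g z * pd m h z) z
       = pds ks0 (\<lambda>z. pd m g z * h z) z + pds ks0 (\<lambda>z. g z * pd m h z) z" if "z \<in> U" for z
      by (rule pds_add[OF U _ that]) (use Suc.IH l sg Suc.prems in auto)
    have d: "(\<lambda>z. pds ks0 (\<lambda>z. pd m g z * h z) z + pds ks0 (\<lambda>z. g z * pd m h z) z)
        differentiable_on U"
      using Suc.IH[OF l sg(1) Suc.prems(3)] Suc.IH[OF l Suc.prems(2) sg(2)]
      by (auto intro!: differentiable_on_add)
    show ?thesis unfolding snoc pds_append using differentiable_on_cong_open[OF U d] e2 e3 by simp
  qed
qed

lemma smooth_on_mult: "open U \<Longrightarrow> smooth_on U g \<Longrightarrow> smooth_on U h \<Longrightarrow>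
    smooth_on U (\<lambda>z. g z * h z)"
  unfolding smooth_on_def[of U "\<lambda>z. g z * h z"] using pds_mult_differentiable_on by blast

lemma smooth_on_cmult: "open U \<Longrightarrow> smooth_on U g \<Longrightarrow> smooth_on U (\<lambda>z. c * g z)"
  using smooth_on_mult[of U "\<lambda>z. c" g] smooth_on_const by auto

lemma smooth_on_diff: "open U \<Longrightarrow> smooth_on U g \<Longrightarrow> smooth_on U h \<Longrightarrow>
    smooth_on U (\<lambda>z. g z - h z)"
  using smooth_on_add[of U g "\<lambda>z. (-1) * h z"] smooth_on_cmult[of U h "-1"] by simp

lemma smooth_on_sum: assumes U: "open U" shows "finite S \<Longrightarrow> (\<And>x. x \<in> S \<Longrightarrow>
    smooth_on U (F x)) \<Longrightarrow> smooth_on U (\<lambda>z. \<Sum>x\<in>S. F x z)"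
proof (induction S rule: finite_induct)
  case empty thus ?case using smooth_on_const[of U 0] by simp
next
  case (insert a S)
  have "smooth_on U (\<lambda>z. F a z + (\<Sum>x\<in>S. F x z))"
    by (rule smooth_on_add[OF U]) (use insert in auto)
  thus ?case using insert by simp
qed

lemma rd_eq: "rd i g = (\<lambda>y. \<Sum>j\<in>UNIV. \<Sum>k\<in>UNIV. levi i j k * y$j * pd k g y)"
  unfolding rd_def by (rule ext) simp

lemma smooth_on_rd: assumes U: "open U" and g: "smooth_on U g" shows "smooth_on U (rd i g)"
proof -
  have "smooth_on U (\<lambda>y. levi i j k * y$j * pd k g y)" for j k
    by (rule smooth_on_mult[OF U smooth_on_cmult[OF U smooth_on_coord] smooth_on_pd[OF g]])
  hence "smooth_on U (\<lambda>y. \<Sum>k\<in>UNIV. levi i j k * y$j * pd k g y)" for j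
    by (rule smooth_on_sum[OF U finite_class.finite_UNIV])
  hence "smooth_on U (\<lambda>y. \<Sum>j\<in>UNIV. \<Sum>k\<in>UNIV. levi i j k * y$j * pd k g y)"
    by (rule smooth_on_sum[OF U finite_class.finite_UNIV])
  thus ?thesis unfolding rd_eq .
qed

lemma sig_eq_coords: "sig A B y = A - B * (\<Sum>j\<in>UNIV. y$j * y$j)"
  by (simp add: sig_def power2_norm_eq_inner inner_vec_def)

lemma smooth_on_sig: assumes U: "open U" shows "smooth_on U (sig A B)"
proof -
  have "smooth_on U (\<lambda>y. y$j * y$j)" for j by (rule smooth_on_mult[OF U smooth_on_coord smooth_on_coord])
  hence "smooth_on U (\<lambda>y. \<Sum>j\<in>UNIV. y$j * y$j)" by (rule smooth_on_sum[OF U finite_class.finite_UNIV])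
  thus ?thesis unfolding sig_eq_coords[abs_def] by (intro smooth_on_diff[OF U] smooth_on_const smooth_on_cmult[OF U])
qed

section \<open>Symmetry of second derivatives\<close>

lemma second_difference_mvt:
  assumes U: "open U" and g: "smooth_on U g" and h: "h > 0"
    and inU: "\<And>s t. 0 \<le> s \<Longrightarrow> s \<le> h \<Longrightarrow> 0 \<le> t \<Longrightarrow> t
        \<le> h \<Longrightarrow> p + s *\<^sub>R unit_vec i + t *\<^sub>R unit_vec j \<in> U"
  shows "\<exists>q. dist q p \<le> 2*h \<and>
     g (p + h *\<^sub>R unit_vec i + h *\<^sub>R unit_vec j) - g (p + h *\<^sub>R unit_vec i) - g (p + h *\<^sub>R
         unit_vec j) + g p = h*h* pd j (pd i g) q"
proof -
  define \<phi> where "\<phi> s = g (p + h *\<^sub>R unit_vec j + s *\<^sub>R unit_vec i) - g (p + s *\<^sub>R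
      unit_vec i)" for s
  define \<phi>' where "\<phi>' s = pd i g (p + h *\<^sub>R unit_vec j + s *\<^sub>R unit_vec i) - pd i g (p + s
      *\<^sub>R unit_vec i)" for s
  have "DERIV \<phi> s :> \<phi>' s" if "0 \<le> s" "s \<le> h" for s
  proof -
    have a: "p + h *\<^sub>R unit_vec j + s *\<^sub>R unit_vec i \<in> U" using inU[of s h] that h by (simp add:
        algebra_simps)
    have b: "p + s *\<^sub>R unit_vec i \<in> U" using inU[of s 0] that h by simp
    show ?thesis unfolding \<phi>_def[abs_def] \<phi>'_def
      by (intro DERIV_diff pd_along_line smooth_on_differentiable_at[OF U g]) (use a b in auto)
  qed
  then obtain s where s: "0 < s" "s < h" "\<phi> h - \<phi> 0 = (h - 0) * \<phi>' s"
    using MVT2[OF h, of \<phi> \<phi>'] by auto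
  define \<psi> where "\<psi> t = pd i g (p + s *\<^sub>R unit_vec i + t *\<^sub>R unit_vec j)" for t
  have gi: "smooth_on U (pd i g)" by (rule smooth_on_pd[OF g])
  have "DERIV \<psi> t :> pd j (pd i g) (p + s *\<^sub>R unit_vec i + t *\<^sub>R unit_vec j)" if "0 \<le> t" "t
      \<le> h" for t
    unfolding \<psi>_def
    by (intro pd_along_line smooth_on_differentiable_at[OF U gi]) (use inU[of s t] that s in auto)
  then obtain t where t: "0 < t" "t < h"
     "\<psi> h - \<psi> 0 = (h - 0) * pd j (pd i g) (p + s *\<^sub>R unit_vec i + t *\<^sub>R unit_vec j)"
    using MVT2[OF h, of \<psi> "\<lambda>t. pd j (pd i g) (p + s *\<^sub>R unit_vec i + t *\<^sub>R unit_vec j)"]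
        by auto
  have "\<phi>' s = \<psi> h - \<psi> 0" unfolding \<phi>'_def \<psi>_def by (simp add: algebra_simps)
  moreover have "\<phi> h - \<phi> 0 = g (p + h *\<^sub>R unit_vec i + h *\<^sub>R unit_vec j) - g (p + h *\<^sub>R
      unit_vec i) - g (p + h *\<^sub>R unit_vec j) + g p"
    unfolding \<phi>_def by (simp add: algebra_simps)
  moreover have "dist (p + s *\<^sub>R unit_vec i + t *\<^sub>R unit_vec j) p \<le> 2 * h"
    using norm_triangle_ineq[of "s *\<^sub>R unit_vec i" "t *\<^sub>R unit_vec j"] s t by (simp add: dist_norm)
  ultimately show ?thesis using s(3) t(3) by (intro exI[of _ "p + s *\<^sub>R unit_vec i + t *\<^sub>R unit_vec
      j"]) auto
qed

lemma square_in_ball: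
  assumes "0 \<le> s" "s \<le> h" "0 \<le> t" "t \<le> h" "2 * h < e"
  shows "p + s *\<^sub>R unit_vec a + t *\<^sub>R unit_vec b \<in> ball p e"
proof -
  have "dist p (p + s *\<^sub>R unit_vec a + t *\<^sub>R unit_vec b) = norm (s *\<^sub>R unit_vec a + t *\<^sub>R
      unit_vec b)"
    by (metis add.assoc add.right_neutral dist_add_cancel dist_0_norm)
  also have "\<dots> \<le> s + t"
    using norm_triangle_ineq[of "s *\<^sub>R unit_vec a" "t *\<^sub>R unit_vec b"] assms by simp
  finally show ?thesis using assms by simp
qed

lemma pd_commute:
  assumes U: "open U" and g: "smooth_on U g" and p: "p \<in> U"
  shows "pd i (pd j g) p = pd j (pd i g) p"
proof -
  obtain e where e: "e > 0" "ball p e \<subseteq> U" using U p open_contains_ball by blast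
  define h where "h n = e / 4 / real (Suc n)" for n
  have h: "h n > 0" "2 * h n < e" for n
  proof -
    show "h n > 0" using e by (simp add: h_def)
    have "h n \<le> e / 4" unfolding h_def using e by (simp add: divide_le_eq)
    then show "2 * h n < e" using e by simp
  qed
  have "2 * h n = e / 2 / real (Suc n)" for n
    by (simp add: h_def field_simps)
  then have h0: "(\<lambda>n. 2 * h n) \<longlonglongrightarrow> 0"
    using LIMSEQ_Suc[OF lim_const_over_n[of "e / 2"]] by simp
  define \<Delta> where "\<Delta> a b n = g (p + h n *\<^sub>R unit_vec a + h n *\<^sub>R unit_vec b) - g (p + h n
      *\<^sub>R unit_vec a)
    - g (p + h n *\<^sub>R unit_vec b) + g p" for a b n
  have \<Delta>_sym: "\<Delta> a b n = \<Delta> b a n" for a b n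
    unfolding \<Delta>_def by (simp add: algebra_simps)
  have mvt: "\<forall>n. \<exists>q. dist q p \<le> 2 * h n \<and> \<Delta> a b n = h n * h n * pd b (pd a g) q" for a b
  proof
    fix n
    show "\<exists>q. dist q p \<le> 2 * h n \<and> \<Delta> a b n = h n * h n * pd b (pd a g) q"
      unfolding \<Delta>_def
    proof (rule second_difference_mvt[OF U g h(1)])
      fix s t assume "0 \<le> s" "s \<le> h n" "0 \<le> t" "t \<le> h n"
      then show "p + s *\<^sub>R unit_vec a + t *\<^sub>R unit_vec b \<in> U"
        using square_in_ball[OF _ _ _ _ h(2)] e(2) by blast
    qed
  qed
  obtain q where q: "\<And>n. dist (q n) p \<le> 2 * h n \<and> \<Delta> i j n = h n * h n * pd j (pd i g) (q n)"
    using mvt[of i j] by metis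
  obtain q' where q': "\<And>n. dist (q' n) p \<le> 2 * h n \<and> \<Delta> j i n = h n * h n * pd i (pd j g) (q' n)"
    using mvt[of j i] by metis
  have eq: "pd j (pd i g) (q n) = pd i (pd j g) (q' n)" for n
    using q[of n] q'[of n] \<Delta>_sym[of i j n] h(1)[of n] by simp
  have lim: "r \<longlonglongrightarrow> p" if "\<And>n. dist (r n) p \<le> 2 * h n" for r
  proof -
    have "(\<lambda>n. dist (r n) p) \<longlonglongrightarrow> 0"
      by (rule Lim_null_comparison[OF _ h0]) (use that in simp)
    then show ?thesis using tendsto_dist_iff by blast
  qed
  have cont: "isCont (pd a (pd b g)) p" for a b
    using differentiable_imp_continuous_within
      smooth_on_differentiable_at[OF U smooth_on_pd[OF smooth_on_pd[OF g]] p] by blast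
  have "(\<lambda>n. pd j (pd i g) (q n)) \<longlonglongrightarrow> pd j (pd i g) p"
    by (rule isCont_tendsto_compose[OF cont lim]) (use q in blast)
  moreover have "(\<lambda>n. pd i (pd j g) (q' n)) \<longlonglongrightarrow> pd i (pd j g) p"
    by (rule isCont_tendsto_compose[OF cont lim]) (use q' in blast)
  ultimately show ?thesis using LIMSEQ_unique eq by simp
qed
section \<open>Commutators of the vector fields\<close>

lemma pd_coord_mult: "g differentiable (at p) \<Longrightarrow>
   pd m (\<lambda>z. c * z$j * g z) p = c * ((if m = j then 1 else 0) * g p + p$j * pd m g p)"
proof -
  assume g: "g differentiable (at p)"
  have d: "(\<lambda>z::real^3. c * z$j) differentiable at p" by (intro differentiable_mult) auto
  have "pd m (\<lambda>z. c * z$j * g z) p = pd m (\<lambda>z. c * z$j) p * g p + c * p$j * pd m g p"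
    by (rule pd_mult[OF d g])
  also have "pd m (\<lambda>z. c * z$j) p = c * (if m = j then 1 else 0)"
    using pd_cmult[of "\<lambda>z. z$j" p m c] by simp
  finally show ?thesis by (simp add: algebra_simps)
qed

lemma pd_rd_expand:
  assumes U: "open U" and g: "smooth_on U g" and p: "p \<in> U"
  shows "pd m (rd i g) p = (\<Sum>j\<in>UNIV. \<Sum>k\<in>UNIV. levi i j k * ((if m = j then 1 else 0) * pd k g p +
      p$j * pd k (pd m g) p))"
proof -
  have dk: "pd k g differentiable at p" for k using smooth_on_differentiable_at[OF U smooth_on_pd[OF g] p] .
  have "pd m (rd i g) p = (\<Sum>j\<in>UNIV. pd m (\<lambda>z. \<Sum>k\<in>UNIV. levi i j k * z$j * pd k g z) p)"
    unfolding rd_eq by (rule pd_sum) (auto intro!: differentiable_sum differentiable_mult dk)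
  also have "\<dots> = (\<Sum>j\<in>UNIV. \<Sum>k\<in>UNIV. pd m (\<lambda>z. levi i j k * z$j * pd k g z) p)"
    by (rule sum.cong[OF refl], rule pd_sum) (auto intro!: differentiable_mult dk)
  also have "\<dots> = (\<Sum>j\<in>UNIV. \<Sum>k\<in>UNIV. levi i j k * ((if m = j then 1 else 0) * pd k g p + p$j
      * pd m (pd k g) p))"
    by (intro sum.cong refl pd_coord_mult dk)
  also have "\<dots> = (\<Sum>j\<in>UNIV. \<Sum>k\<in>UNIV. levi i j k * ((if m = j then 1 else 0) * pd k g p + p$j
      * pd k (pd m g) p))"
    using pd_commute[OF U g p] by simp
  finally show ?thesis .
qed

lemma pd_rd_commutator:
  assumes U: "open U" and g: "smooth_on U g" and p: "p \<in> U"
  shows "pd m (rd i g) p = rd i (pd m g) p + (\<Sum>k\<in>UNIV. levi i m k * pd k g p)"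
  unfolding pd_rd_expand[OF assms] rd_def
  using exhaust_3[of m] by (auto simp: sum_3 algebra_simps)

lemma rd_rd_commutator_algebra:
  fixes X :: "3 \<Rightarrow> 3 \<Rightarrow> real" and q :: "real^3"
  assumes "X 2 1 = X 1 2" "X 3 1 = X 1 3" "X 3 2 = X 2 3"
  shows "(\<Sum>a\<in>UNIV. \<Sum>b\<in>UNIV. levi i a b * q$a * ((\<Sum>c\<in>UNIV. \<Sum>d\<in>UNIV. levi j c d *
      q$c * X b d) + (\<Sum>d\<in>UNIV. levi j b d * Y d)))
   - (\<Sum>a\<in>UNIV. \<Sum>b\<in>UNIV. levi j a b * q$a * ((\<Sum>c\<in>UNIV. \<Sum>d\<in>UNIV. levi i c d * q$c
       * X b d) + (\<Sum>d\<in>UNIV. levi i b d * Y d)))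
   = (\<Sum>l\<in>UNIV. - levi i j l * (\<Sum>a\<in>UNIV. \<Sum>d\<in>UNIV. levi l a d * q$a * Y d))"
  using exhaust_3[of i] exhaust_3[of j] assms
  by (auto simp: sum_3 levi_def algebra_simps)

lemma rd_rd_commutator:
  assumes U: "open U" and g: "smooth_on U g" and p: "p \<in> U"
  shows "rd i (rd j g) p = rd j (rd i g) p + (\<Sum>l\<in>UNIV. - levi i j l * rd l g p)"
proof -
  have e: "pd b (rd k g) p = (\<Sum>c\<in>UNIV. \<Sum>d\<in>UNIV. levi k c d * p$c * pd d (pd b g) p) +
      (\<Sum>d\<in>UNIV. levi k b d * pd d g p)" for b k
    using pd_rd_commutator[OF assms, of b k] unfolding rd_def .
  have s: "pd a (pd b g) p = pd b (pd a g) p" for a b using pd_commute[OF U g p] .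
  show ?thesis
    using rd_rd_commutator_algebra[of "\<lambda>b d. pd d (pd b g) p" i p j "\<lambda>d. pd d g p"] s
    unfolding rd_def[of i "rd j g"] rd_def[of j "rd i g"] rd_def[of _ g] e
    by (simp add: algebra_simps)
qed

section \<open>Words in the vector fields\<close>

datatype vf = Par 3 | Rot 3

type_synonym lincomb = "(real \<times> vf list) list"

fun vf_apply :: "vf \<Rightarrow> (real^3 \<Rightarrow> real) \<Rightarrow> real^3 \<Rightarrow> real" where
  "vf_apply (Par m) = pd m" | "vf_apply (Rot i) = rd i"

fun word_apply :: "vf list \<Rightarrow> (real^3 \<Rightarrow> real) \<Rightarrow> real^3 \<Rightarrow> real" where
  "word_apply [] g = g" | "word_apply (x # w) g = vf_apply x (word_apply w g)"

lemma word_apply_append: "word_apply (u @ v) g = word_apply u (word_apply v g)"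
  by (induction u) auto

lemma rd_cong_open: "open U \<Longrightarrow> (\<And>z. z \<in> U \<Longrightarrow> g z = h z) \<Longrightarrow> p
    \<in> U \<Longrightarrow> rd i g p = rd i h p"
  unfolding rd_def using pd_cong_open[of U p g h] by simp

lemma vf_apply_cong_open: "open U \<Longrightarrow> (\<And>z. z \<in> U \<Longrightarrow> g z = h z)
    \<Longrightarrow> p \<in> U \<Longrightarrow> vf_apply x g p = vf_apply x h p"
  by (cases x) (auto intro: pd_cong_open rd_cong_open)

lemma word_apply_cong_open: "open U \<Longrightarrow> (\<And>z. z \<in> U \<Longrightarrow> g z = h z)
    \<Longrightarrow> p \<in> U \<Longrightarrow> word_apply w g p = word_apply w h p"
proof (induction w arbitrary: p)
  case (Cons x w) thus ?case using vf_apply_cong_open[of U "word_apply w g" "word_apply w h" p x] by simp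
qed simp

lemma smooth_on_vf_apply: "open U \<Longrightarrow> smooth_on U g \<Longrightarrow> smooth_on U (vf_apply x g)"
  by (cases x) (auto intro: smooth_on_pd smooth_on_rd)

lemma smooth_on_word_apply: "open U \<Longrightarrow> smooth_on U g \<Longrightarrow> smooth_on U (word_apply w g)"
  by (induction w) (auto intro: smooth_on_vf_apply)

lemma rd_add: assumes "g differentiable at p" "h differentiable at p"
  shows "rd i (\<lambda>z. g z + h z) p = rd i g p + rd i h p"
  unfolding rd_def using pd_add[OF assms]
  by (simp add: sum.distrib[symmetric] algebra_simps)

lemma rd_cmult: assumes "g differentiable at p"
  shows "rd i (\<lambda>z. c * g z) p = c * rd i g p"
  unfolding rd_def using pd_cmult[OF assms]
  by (simp add: sum_distrib_left algebra_simps)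

lemma vf_apply_add: "g differentiable at p \<Longrightarrow> h differentiable at p \<Longrightarrow>
  vf_apply x (\<lambda>z. g z + h z) p = vf_apply x g p + vf_apply x h p"
  by (cases x) (auto simp: pd_add rd_add)

lemma vf_apply_cmult: "g differentiable at p \<Longrightarrow> vf_apply x (\<lambda>z. c * g z) p = c * vf_apply x g p"
  by (cases x) (auto simp: pd_cmult rd_cmult)

lemma vf_apply_zero: "vf_apply x (\<lambda>z. 0) = (\<lambda>z. 0)"
  by (cases x) (auto simp: rd_def fun_eq_iff)

lemma word_apply_add:
  assumes U: "open U" and g: "smooth_on U g" and h: "smooth_on U h"
  shows "p \<in> U \<Longrightarrow> word_apply w (\<lambda>z. g z + h z) p = word_apply w g p + word_apply w h p"
proof (induction w arbitrary: p)
  case (Cons x w)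
  have "word_apply (x # w) (\<lambda>z. g z + h z) p = vf_apply x (\<lambda>z. word_apply w g z + word_apply w h z) p"
    using vf_apply_cong_open[OF U Cons.IH Cons.prems] by simp
  also have "\<dots> = word_apply (x # w) g p + word_apply (x # w) h p"
    using vf_apply_add smooth_on_differentiable_at[OF U smooth_on_word_apply[OF U g] Cons.prems]
        smooth_on_differentiable_at[OF U smooth_on_word_apply[OF U h] Cons.prems] by simp
  finally show ?case .
qed simp

lemma word_apply_cmult:
  assumes U: "open U" and g: "smooth_on U g"
  shows "p \<in> U \<Longrightarrow> word_apply w (\<lambda>z. c * g z) p = c * word_apply w g p"
proof (induction w arbitrary: p)
  case (Cons x w)
  have "word_apply (x # w) (\<lambda>z. c * g z) p = vf_apply x (\<lambda>z. c * word_apply w g z) p"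
    using vf_apply_cong_open[OF U Cons.IH Cons.prems] by simp
  also have "\<dots> = c * word_apply (x # w) g p"
    using vf_apply_cmult smooth_on_differentiable_at[OF U smooth_on_word_apply[OF U g] Cons.prems] by simp
  finally show ?case .
qed simp

lemma word_apply_zero: "word_apply w (\<lambda>z. 0) = (\<lambda>z. 0)"
  by (induction w) (auto simp: vf_apply_zero)

fun lc_apply :: "lincomb \<Rightarrow> (real^3 \<Rightarrow> real) \<Rightarrow> real^3 \<Rightarrow> real" where
  "lc_apply [] g = (\<lambda>z. 0)"
| "lc_apply ((c, w) # L) g = (\<lambda>z. c * word_apply w g z + lc_apply L g z)"

lemma smooth_on_lc_apply: "open U \<Longrightarrow> smooth_on U g \<Longrightarrow> smooth_on U (lc_apply L g)"
  by (induction L g rule: lc_apply.induct) (auto intro!: smooth_on_add smooth_on_cmult smooth_on_word_apply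
      smooth_on_const)

definition lc_prefix :: "vf list \<Rightarrow> lincomb \<Rightarrow> lincomb" where
  "lc_prefix u L = map (\<lambda>(c, w). (c, u @ w)) L"

definition lc_suffix :: "vf list \<Rightarrow> lincomb \<Rightarrow> lincomb" where
  "lc_suffix s L = map (\<lambda>(c, w). (c, w @ s)) L"

definition lc_scale :: "real \<Rightarrow> lincomb \<Rightarrow> lincomb" where
  "lc_scale d L = map (\<lambda>(c, w). (d * c, w)) L"

lemma lc_apply_suffix: "lc_apply (lc_suffix s L) g = lc_apply L (word_apply s g)"
  by (induction L g rule: lc_apply.induct) (auto simp: lc_suffix_def word_apply_append)

lemma lc_apply_scale: "lc_apply (lc_scale d L) g z = d * lc_apply L g z"
  by (induction L g rule: lc_apply.induct) (auto simp: lc_scale_def algebra_simps)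

lemma lc_apply_append: "lc_apply (L1 @ L2) g z = lc_apply L1 g z + lc_apply L2 g z"
  by (induction L1 g rule: lc_apply.induct) auto

lemma word_apply_lc_apply:
  assumes U: "open U" and g: "smooth_on U g"
  shows "p \<in> U \<Longrightarrow> word_apply u (lc_apply L g) p = lc_apply (lc_prefix u L) g p"
proof (induction L arbitrary: p)
  case Nil thus ?case by (simp add: word_apply_zero lc_prefix_def)
next
  case (Cons a L)
  obtain c w where a: "a = (c, w)" by fastforce
  have s1: "smooth_on U (\<lambda>z. c * word_apply w g z)" by (rule smooth_on_cmult[OF U smooth_on_word_apply[OF U g]])
  have "word_apply u (lc_apply (a # L) g) p = word_apply u (\<lambda>z. c * word_apply w g z) p + word_apply u
      (lc_apply L g) p"
    unfolding a using word_apply_add[OF U s1 smooth_on_lc_apply[OF U g] Cons.prems] by simp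
  also have "\<dots> = c * word_apply (u @ w) g p + lc_apply (lc_prefix u L) g p"
    using word_apply_cmult[OF U smooth_on_word_apply[OF U g] Cons.prems] Cons.IH[OF Cons.prems] by (simp add:
        word_apply_append)
  finally show ?case by (simp add: a lc_prefix_def)
qed

fun is_Par :: "vf \<Rightarrow> bool" where "is_Par (Par _) = True" | "is_Par (Rot _) = False"

definition num_Par :: "vf list \<Rightarrow> nat" where "num_Par w = length (filter is_Par w)"
definition num_Rot :: "vf list \<Rightarrow> nat" where "num_Rot w = length (filter (\<lambda>x. \<not> is_Par x) w)"
definition count_Par :: "vf list \<Rightarrow> 3 \<Rightarrow> nat" where "count_Par w = (\<lambda>m. length
    (filter (\<lambda>x. x = Par m) w))"
definition count_Rot :: "vf list \<Rightarrow> 3 \<Rightarrow> nat" where "count_Rot w = (\<lambda>m. length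
    (filter (\<lambda>x. x = Rot m) w))"

definition par_word :: "(3 \<Rightarrow> nat) \<Rightarrow> vf list" where
  "par_word a = replicate (a 1) (Par 1) @ replicate (a 2) (Par 2) @ replicate (a 3) (Par 3)"
definition rot_word :: "(3 \<Rightarrow> nat) \<Rightarrow> vf list" where
  "rot_word a = replicate (a 1) (Rot 1) @ replicate (a 2) (Rot 2) @ replicate (a 3) (Rot 3)"
definition canon_word :: "(3 \<Rightarrow> nat) \<Rightarrow> (3 \<Rightarrow> nat) \<Rightarrow> vf list" where
    "canon_word a b = par_word a @ rot_word b"

lemma word_apply_replicate: "word_apply (replicate n x) g = (vf_apply x ^^ n) g"
  by (induction n) auto

lemma word_apply_par_word: "word_apply (par_word a) g = dpow a g"
  by (simp add: par_word_def word_apply_append word_apply_replicate dpow_def)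
lemma word_apply_rot_word: "word_apply (rot_word a) g = rpow a g"
  by (simp add: rot_word_def word_apply_append word_apply_replicate rpow_def)
lemma word_apply_canon_word: "word_apply (canon_word a b) g = dpow a (rpow b g)"
  by (simp add: canon_word_def word_apply_append word_apply_par_word word_apply_rot_word)

lemma mlen_eq: "mlen a = a 1 + a 2 + a 3" by (simp add: mlen_def sum_3)

lemma count_simps[simp]:
  "num_Par [] = 0" "num_Rot [] = 0" "count_Par [] = (\<lambda>m. 0)" "count_Rot [] = (\<lambda>m. 0)"
  "num_Par (x # w) = (if is_Par x then Suc (num_Par w) else num_Par w)"
  "num_Rot (x # w) = (if is_Par x then num_Rot w else Suc (num_Rot w))"
  "num_Par (u @ v) = num_Par u + num_Par v" "num_Rot (u @ v) = num_Rot u + num_Rot v"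
  "count_Par (u @ v) = (\<lambda>m. count_Par u m + count_Par v m)" "count_Rot (u @ v) = (\<lambda>m. count_Rot u m
      + count_Rot v m)"
  by (auto simp: num_Par_def num_Rot_def count_Par_def count_Rot_def)

lemma count_Par_Cons[simp]: "count_Par (x # w) = (\<lambda>m. (if x = Par m then 1 else 0) + count_Par w m)"
  by (auto simp: count_Par_def)
lemma count_Rot_Cons[simp]: "count_Rot (x # w) = (\<lambda>m. (if x = Rot m then 1 else 0) + count_Rot w m)"
  by (auto simp: count_Rot_def)

lemma length_eq_num_Par_Rot: "length w = num_Par w + num_Rot w"
  by (induction w) auto

lemma mlen_count_Par: "mlen (count_Par w) = num_Par w"
proof (induction w)
  case Nil thus ?case by (simp add: mlen_def)
next
  case (Cons x w) thus ?case
    using exhaust_3 by (cases x) (auto simp: mlen_eq count_Par_Cons)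
qed

lemma mlen_count_Rot: "mlen (count_Rot w) = num_Rot w"
proof (induction w)
  case Nil thus ?case by (simp add: mlen_def)
next
  case (Cons x w) thus ?case
    using exhaust_3 by (cases x) (auto simp: mlen_eq count_Rot_Cons)
qed

lemma canon_word_counts[simp]: "num_Par (canon_word a b) = mlen a" "num_Rot (canon_word a b) = mlen b" "count_Par
    (canon_word a b) = a" "count_Rot (canon_word a b) = b"
  "length (canon_word a b) = mlen a + mlen b"
proof -
  show "num_Par (canon_word a b) = mlen a" "num_Rot (canon_word a b) = mlen b"
    by (auto simp: canon_word_def par_word_def rot_word_def num_Par_def num_Rot_def filter_replicate mlen_eq)
  show "count_Par (canon_word a b) = a" "count_Rot (canon_word a b) = b"
    using exhaust_3 by (auto simp: fun_eq_iff canon_word_def par_word_def rot_word_def count_Par_def count_Rot_def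
        filter_replicate)
  thus "length (canon_word a b) = mlen a + mlen b"
    using \<open>num_Par (canon_word a b) = mlen a\<close> \<open>num_Rot (canon_word a b) = mlen b\<close>
        length_eq_num_Par_Rot by metis
qed

lemma all_Par_counts: "\<forall>x\<in>set v. is_Par x \<Longrightarrow> num_Par v = length v \<and> num_Rot v = 0"
  by (induction v) auto
lemma all_Rot_counts: "\<forall>x\<in>set v. \<not> is_Par x \<Longrightarrow> num_Par v = 0 \<and> num_Rot v =
    length v"
  by (induction v) auto
lemma par_word_all_Par: "\<forall>x\<in>set (par_word a). is_Par x" by (auto simp: par_word_def)
lemma rot_word_all_Rot: "\<forall>x\<in>set (rot_word a). \<not> is_Par x" by (auto simp: rot_word_def)
lemma length_par_word: "length (par_word a) = mlen a" by (simp add: par_word_def mlen_eq)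
lemma length_rot_word: "length (rot_word a) = mlen a" by (simp add: rot_word_def mlen_eq)


lemma count_Par_par_word: "count_Par (par_word a) = a" and count_Rot_par_word: "count_Rot (par_word a) =
    (\<lambda>_. 0)"
  and count_Par_rot_word: "count_Par (rot_word b) = (\<lambda>_. 0)" and count_Rot_rot_word: "count_Rot (rot_word
      b) = b"
proof -
  have e1: "canon_word a (\<lambda>_. 0) = par_word a" by (simp add: canon_word_def rot_word_def)
  have e2: "canon_word (\<lambda>_. 0) b = rot_word b" by (simp add: canon_word_def par_word_def)
  show "count_Par (par_word a) = a" "count_Rot (par_word a) = (\<lambda>_. 0)" using canon_word_counts(3,4)[of a
      "\<lambda>_. 0"] e1 by simp_all
  show "count_Par (rot_word b) = (\<lambda>_. 0)" "count_Rot (rot_word b) = b" using canon_word_counts(3,4)[of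
      "\<lambda>_. 0" b] e2 by simp_all
qed

lemma num_par_word: "num_Par (par_word a) = mlen a" "num_Rot (par_word a) = 0" using all_Par_counts[OF
    par_word_all_Par] length_par_word by auto
lemma num_rot_word: "num_Par (rot_word b) = 0" "num_Rot (rot_word b) = mlen b" using all_Rot_counts[OF
    rot_word_all_Rot] length_rot_word by auto

lemma counts_Par_single: "count_Par [Par k] = (\<lambda>m. if m = k then 1 else 0)" "count_Rot [Par k] =
    (\<lambda>m. 0)" "num_Par [Par k] = 1" "num_Rot [Par k] = 0"
  by (auto simp: count_Par_def count_Rot_def num_Par_def num_Rot_def fun_eq_iff)
lemma counts_Rot_single: "count_Par [Rot i] = (\<lambda>m. 0)" "num_Par [Rot i] = 0" "num_Rot [Rot i] = 1"
  by (auto simp: count_Par_def num_Par_def num_Rot_def fun_eq_iff)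

section \<open>Normal ordering of words\<close>

lemma rd_par_word_commute:
  assumes U: "open U"
  shows "\<forall>x\<in>set u. is_Par x \<Longrightarrow> \<exists>K. (\<forall>(c,v)\<in>set K.
      (\<forall>x\<in>set v. is_Par x) \<and> length v = length u) \<and>
     (\<forall>G. smooth_on U G \<longrightarrow> (\<forall>z\<in>U. rd i (word_apply u G) z = word_apply u (rd i
         G) z + lc_apply K G z))"
proof (induction u)
  case Nil thus ?case by (intro exI[of _ "[]"]) auto
next
  case (Cons x u0)
  obtain m where x: "x = Par m" using Cons.prems by (cases x) auto
  obtain K0 where K0: "\<forall>(c,v)\<in>set K0. (\<forall>x\<in>set v. is_Par x) \<and> length v = length u0"
    "\<And>G z. smooth_on U G \<Longrightarrow> z \<in> U \<Longrightarrow> rd i (word_apply u0 G) z = word_apply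
        u0 (rd i G) z + lc_apply K0 G z"
    using Cons by auto
  define K where "K = lc_prefix [Par m] K0 @ lc_scale (-1) (map (\<lambda>k. (levi i m k, Par k # u0)) [1,2,3::3])"
  have K1: "\<forall>(c,v)\<in>set K. (\<forall>x\<in>set v. is_Par x) \<and> length v = length (x # u0)"
      using K0(1) Cons.prems unfolding K_def lc_prefix_def lc_scale_def by (fastforce simp: x)
  show ?case
  proof (intro exI[of _ K] conjI[OF K1] allI impI ballI)
    fix G z assume G: "smooth_on U G" and z: "z \<in> U"
    have Y: "smooth_on U (word_apply u0 G)" by (rule smooth_on_word_apply[OF U G])
    have "rd i (pd m (word_apply u0 G)) z = pd m (rd i (word_apply u0 G)) z - (\<Sum>k\<in>UNIV. levi i m k * pd k
        (word_apply u0 G) z)"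
      using pd_rd_commutator[OF U Y z, of m i] by simp
    also have "pd m (rd i (word_apply u0 G)) z = word_apply [Par m] (\<lambda>z. word_apply u0 (rd i G) z +
        lc_apply K0 G z) z"
      using word_apply_cong_open[OF U K0(2)[OF G] z, where w="[Par m]"] by simp
    also have "\<dots> = word_apply [Par m] (word_apply u0 (rd i G)) z + word_apply [Par m] (lc_apply K0 G) z"
      by (rule word_apply_add[OF U smooth_on_word_apply[OF U smooth_on_rd[OF U G]] smooth_on_lc_apply[OF U G] z])
    also have "\<dots> = word_apply (x # u0) (rd i G) z + lc_apply (lc_prefix [Par m] K0) G z"
      using word_apply_lc_apply[OF U G z, of "[Par m]" K0] by (simp add: x)
    also have "(\<Sum>k\<in>UNIV. levi i m k * pd k (word_apply u0 G) z) = lc_apply (map (\<lambda>k. (levi i m k,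
        Par k # u0)) [1,2,3::3]) G z"
      by (simp add: sum_3 algebra_simps)
    finally show "rd i (word_apply (x # u0) G) z = word_apply (x # u0) (rd i G) z + lc_apply K G z"
      unfolding K_def by (simp add: x lc_apply_append lc_apply_scale)
  qed
qed

lemma rd_rot_word_commute:
  assumes U: "open U"
  shows "\<forall>x\<in>set u. \<not> is_Par x \<Longrightarrow> \<exists>M. (\<forall>(c,v)\<in>set M.
      (\<forall>x\<in>set v. \<not> is_Par x) \<and> length v = length u) \<and>
     (\<forall>G. smooth_on U G \<longrightarrow> (\<forall>z\<in>U. rd i (word_apply u G) z = word_apply u (rd i
         G) z + lc_apply M G z))"
proof (induction u)
  case Nil thus ?case by (intro exI[of _ "[]"]) auto
next
  case (Cons x u0)
  obtain j where x: "x = Rot j" using Cons.prems by (cases x) auto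
  obtain M0 where M0: "\<forall>(c,v)\<in>set M0. (\<forall>x\<in>set v. \<not> is_Par x) \<and> length v = length u0"
    "\<And>G z. smooth_on U G \<Longrightarrow> z \<in> U \<Longrightarrow> rd i (word_apply u0 G) z = word_apply
        u0 (rd i G) z + lc_apply M0 G z"
    using Cons by auto
  define M where "M = lc_prefix [Rot j] M0 @ map (\<lambda>l. (- levi i j l, Rot l # u0)) [1,2,3::3]"
  have M1: "\<forall>(c,v)\<in>set M. (\<forall>x\<in>set v. \<not> is_Par x) \<and> length v = length (x # u0)"
    using M0(1) Cons.prems unfolding M_def lc_prefix_def by (fastforce simp: x)
  show ?case
  proof (intro exI[of _ M] conjI[OF M1] allI impI ballI)
    fix G z assume G: "smooth_on U G" and z: "z \<in> U"
    define Y where "Y = word_apply u0 G"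
    have Y: "smooth_on U Y" unfolding Y_def by (rule smooth_on_word_apply[OF U G])
    have "rd i (word_apply (x # u0) G) z = rd i (rd j Y) z" by (simp add: x Y_def)
    also have "\<dots> = rd j (rd i Y) z + (\<Sum>l\<in>UNIV. - levi i j l * rd l Y z)"
      by (rule rd_rd_commutator[OF U Y z])
    also have "rd j (rd i Y) z = word_apply [Rot j] (\<lambda>z. word_apply u0 (rd i G) z + lc_apply M0 G z) z"
      using word_apply_cong_open[OF U M0(2)[OF G] z, where w="[Rot j]"] by (simp add: Y_def)
    also have "\<dots> = word_apply [Rot j] (word_apply u0 (rd i G)) z + word_apply [Rot j] (lc_apply M0 G) z"
      by (rule word_apply_add[OF U smooth_on_word_apply[OF U smooth_on_rd[OF U G]] smooth_on_lc_apply[OF U G] z])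
    also have "\<dots> = word_apply (x # u0) (rd i G) z + lc_apply (lc_prefix [Rot j] M0) G z"
      using word_apply_lc_apply[OF U G z, of "[Rot j]" M0] by (simp add: x)
    also have "(\<Sum>l\<in>UNIV. - levi i j l * rd l Y z) = lc_apply (map (\<lambda>l. (- levi i j l, Rot l # u0))
        [1,2,3::3]) G z"
      by (simp add: sum_3 algebra_simps Y_def)
    finally show "rd i (word_apply (x # u0) G) z = word_apply (x # u0) (rd i G) z + lc_apply M G z"
      unfolding M_def by (simp add: lc_apply_append)
  qed
qed

lemma pd_par_power_commute:
  assumes U: "open U" and G: "smooth_on U G"
  shows "z \<in> U \<Longrightarrow> pd m (word_apply (replicate n (Par j)) G) z = word_apply (replicate n (Par j))
      (pd m G) z"
proof (induction n arbitrary: z)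
  case (Suc n)
  have Y: "smooth_on U (word_apply (replicate n (Par j)) G)" by (rule smooth_on_word_apply[OF U G])
  have "pd m (word_apply (replicate (Suc n) (Par j)) G) z = pd j (pd m (word_apply (replicate n (Par j)) G)) z"
    using pd_commute[OF U Y Suc.prems] by simp
  also have "\<dots> = pd j (word_apply (replicate n (Par j)) (pd m G)) z"
    by (rule pd_cong_open[OF U Suc.prems Suc.IH])
  finally show ?case by simp
qed simp


lemma pd_par_word:
  assumes U: "open U" and G: "smooth_on U G" and z: "z \<in> U"
  shows "pd m (word_apply (par_word a) G) z = word_apply (par_word (a(m := a m + 1))) G z"
proof -
  consider "m = 1" | "m = 2" | "m = 3" using exhaust_3 by blast
  thus ?thesis
  proof cases
    case 1 thus ?thesis by (simp add: par_word_def word_apply_append)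
  next
    case 2
    define Y where "Y = word_apply (replicate (a 2) (Par 2) @ replicate (a 3) (Par 3)) G"
    have Y: "smooth_on U Y" unfolding Y_def by (rule smooth_on_word_apply[OF U G])
    have "pd m (word_apply (par_word a) G) z = pd 2 (word_apply (replicate (a 1) (Par 1)) Y) z"
      by (simp add: 2 par_word_def word_apply_append Y_def)
    also have "\<dots> = word_apply (replicate (a 1) (Par 1)) (pd 2 Y) z" by (rule pd_par_power_commute[OF U Y z])
    also have "\<dots> = word_apply (par_word (a(m := a m + 1))) G z"
      by (simp add: 2 par_word_def word_apply_append Y_def)
    finally show ?thesis .
  next
    case 3
    define Y2 where "Y2 = word_apply (replicate (a 3) (Par 3)) G"
    define Y1 where "Y1 = word_apply (replicate (a 2) (Par 2)) Y2"
    have Y2: "smooth_on U Y2" unfolding Y2_def by (rule smooth_on_word_apply[OF U G])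
    have Y1: "smooth_on U Y1" unfolding Y1_def by (rule smooth_on_word_apply[OF U Y2])
    have "pd m (word_apply (par_word a) G) z = pd 3 (word_apply (replicate (a 1) (Par 1)) Y1) z"
      by (simp add: 3 par_word_def word_apply_append Y1_def Y2_def)
    also have "\<dots> = word_apply (replicate (a 1) (Par 1)) (pd 3 Y1) z" by (rule pd_par_power_commute[OF U Y1 z])
    also have "\<dots> = word_apply (replicate (a 1) (Par 1)) (word_apply (replicate (a 2) (Par 2)) (pd 3 Y2)) z"
      by (rule word_apply_cong_open[OF U _ z]) (unfold Y1_def, rule pd_par_power_commute[OF U Y2])
    also have "\<dots> = word_apply (par_word (a(m := a m + 1))) G z"
      by (simp add: 3 par_word_def word_apply_append Y2_def)
    finally show ?thesis .
  qed
qed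

lemma rot_word_split:
  "\<exists>s t. rot_word b = s @ replicate (b i) (Rot i) @ t \<and> rot_word (b(i := b i + 1)) = s @ replicate (b
      i + 1) (Rot i) @ t
     \<and> (\<forall>x\<in>set s. \<not> is_Par x)"
proof -
  consider "i = 1" | "i = 2" | "i = 3" using exhaust_3 by blast
  then show ?thesis
  proof cases
    case 1
    show ?thesis by (rule exI[of _ "[]"], rule exI[of _ "replicate (b 2) (Rot 2) @ replicate (b 3) (Rot 3)"]) (auto
        simp: rot_word_def 1)
  next
    case 2
    show ?thesis by (rule exI[of _ "replicate (b 1) (Rot 1)"], rule exI[of _ "replicate (b 3) (Rot 3)"]) (auto
        simp: rot_word_def 2)
  next
    case 3
    show ?thesis by (rule exI[of _ "replicate (b 1) (Rot 1) @ replicate (b 2) (Rot 2)"], rule exI[of _ "[]"]) (auto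
        simp: rot_word_def 3)
  qed
qed

lemma rd_rot_word:
  assumes U: "open U"
  shows "\<exists>M. (\<forall>(c,v)\<in>set M. (\<forall>x\<in>set v. \<not> is_Par x) \<and> length v = mlen b) \<and>
    (\<forall>G. smooth_on U G \<longrightarrow> (\<forall>z\<in>U. rd i (word_apply (rot_word b) G) z = word_apply
        (rot_word (b(i := b i + 1))) G z + lc_apply M G z))"
proof -
  obtain s t where split: "rot_word b = s @ replicate (b i) (Rot i) @ t"
    "rot_word (b(i := b i + 1)) = s @ replicate (b i + 1) (Rot i) @ t" "\<forall>x\<in>set s. \<not> is_Par x"
    using rot_word_split by blast
  obtain M where M: "\<forall>(c,v)\<in>set M. (\<forall>x\<in>set v. \<not> is_Par x) \<and> length v = length s"
    "\<And>G z. smooth_on U G \<Longrightarrow> z \<in> U \<Longrightarrow> rd i (word_apply s G) z = word_apply s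
        (rd i G) z + lc_apply M G z"
    using rd_rot_word_commute[OF U split(3)] by blast
  define r where "r = replicate (b i) (Rot i) @ t"
  show ?thesis
  proof (intro exI[of _ "lc_suffix r M"] conjI)
    show "\<forall>(c,v)\<in>set (lc_suffix r M). (\<forall>x\<in>set v. \<not> is_Par x) \<and> length v = mlen b"
      using M(1) split(1) rot_word_all_Rot[of b] length_rot_word[of b] unfolding lc_suffix_def r_def by fastforce
  next
    show "\<forall>G. smooth_on U G \<longrightarrow> (\<forall>z\<in>U. rd i (word_apply (rot_word b) G) z
      = word_apply (rot_word (b(i := b i + 1))) G z + lc_apply (lc_suffix r M) G z)"
    proof (intro allI impI ballI)
    fix G z assume G: "smooth_on U G" and z: "z \<in> U"
    have "rd i (word_apply (rot_word b) G) z = rd i (word_apply s (word_apply r G)) z"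
      by (simp add: split(1) r_def word_apply_append)
    also have "\<dots> = word_apply s (rd i (word_apply r G)) z + lc_apply M (word_apply r G) z"
      by (rule M(2)[OF smooth_on_word_apply[OF U G] z])
    also have "\<dots> = word_apply (rot_word (b(i := b i + 1))) G z + lc_apply (lc_suffix r M) G z"
      unfolding split(2) r_def by (simp add: word_apply_append lc_apply_suffix)
    finally show "rd i (word_apply (rot_word b) G) z = word_apply (rot_word (b(i := b i + 1))) G z + lc_apply
        (lc_suffix r M) G z" .
    qed
  qed
qed

lemma rd_canon_word:
  assumes U: "open U"
  shows "\<exists>L. (\<forall>(c,v)\<in>set L. num_Par v = mlen a \<and> num_Rot v = mlen b \<and> length v = mlen
      a + mlen b) \<and>
    (\<forall>G. smooth_on U G \<longrightarrow> (\<forall>z\<in>U. rd i (word_apply (canon_word a b) G) z =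
        word_apply (canon_word a (b(i := b i + 1))) G z + lc_apply L G z))"
proof -
  obtain K where K: "\<forall>(c,v)\<in>set K. (\<forall>x\<in>set v. is_Par x) \<and> length v = length (par_word a)"
    "\<And>G z. smooth_on U G \<Longrightarrow> z \<in> U \<Longrightarrow> rd i (word_apply (par_word a) G) z =
        word_apply (par_word a) (rd i G) z + lc_apply K G z"
    using rd_par_word_commute[OF U par_word_all_Par, where i=i] by blast
  obtain M where M: "\<forall>(c,v)\<in>set M. (\<forall>x\<in>set v. \<not> is_Par x) \<and> length v = mlen b"
    "\<And>G z. smooth_on U G \<Longrightarrow> z \<in> U \<Longrightarrow> rd i (word_apply (rot_word b) G) z =
        word_apply (rot_word (b(i := b i + 1))) G z + lc_apply M G z"
    using rd_rot_word[OF U, of b i] by blast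
  define L where "L = lc_prefix (par_word a) M @ lc_suffix (rot_word b) K"
  have L1: "\<forall>(c,v)\<in>set L. num_Par v = mlen a \<and> num_Rot v = mlen b \<and> length v = mlen a + mlen b"
  proof
    fix cv assume "cv \<in> set L"
    then consider (m) c v where "(c, v) \<in> set M" "cv = (c, par_word a @ v)" | (k) c v where "(c, v) \<in> set
        K" "cv = (c, v @ rot_word b)"
      unfolding L_def lc_prefix_def lc_suffix_def by auto
    thus "case cv of (c, v) \<Rightarrow> num_Par v = mlen a \<and> num_Rot v = mlen b \<and> length v = mlen a +
        mlen b"
    proof cases
      case m
      have "(\<forall>x\<in>set v. \<not> is_Par x) \<and> length v = mlen b" using M(1) m(1) by fastforce
      thus ?thesis using m(2) all_Rot_counts[of v] all_Par_counts[OF par_word_all_Par[of a]] length_par_word[of a]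
          by simp
    next
      case k
      have "(\<forall>x\<in>set v. is_Par x) \<and> length v = length (par_word a)" using K(1) k(1) by fastforce
      thus ?thesis using k(2) all_Par_counts[of v] all_Rot_counts[OF rot_word_all_Rot[of b]] length_par_word[of a]
          length_rot_word[of b] by simp
    qed
  qed
  show ?thesis
  proof (intro exI[of _ L] conjI[OF L1] allI impI ballI)
    fix G z assume G: "smooth_on U G" and z: "z \<in> U"
    have Y: "smooth_on U (word_apply (rot_word b) G)" by (rule smooth_on_word_apply[OF U G])
    have "rd i (word_apply (canon_word a b) G) z = rd i (word_apply (par_word a) (word_apply (rot_word b) G)) z" by
        (simp add: canon_word_def word_apply_append)
    also have "\<dots> = word_apply (par_word a) (rd i (word_apply (rot_word b) G)) z + lc_apply K (word_apply
        (rot_word b) G) z" by (rule K(2)[OF Y z])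
    also have "word_apply (par_word a) (rd i (word_apply (rot_word b) G)) z = word_apply (par_word a) (\<lambda>z.
        word_apply (rot_word (b(i := b i + 1))) G z + lc_apply M G z) z"
      by (rule word_apply_cong_open[OF U M(2)[OF G] z])
    also have "\<dots> = word_apply (par_word a) (word_apply (rot_word (b(i := b i + 1))) G) z + word_apply
        (par_word a) (lc_apply M G) z"
      by (rule word_apply_add[OF U smooth_on_word_apply[OF U G] smooth_on_lc_apply[OF U G] z])
    also have "\<dots> = word_apply (canon_word a (b(i := b i + 1))) G z + lc_apply (lc_prefix (par_word a) M) G z"
      using word_apply_lc_apply[OF U G z, of "par_word a" M] by (simp add: canon_word_def word_apply_append)
    finally show "rd i (word_apply (canon_word a b) G) z = word_apply (canon_word a (b(i := b i + 1))) G z +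
        lc_apply L G z"
      unfolding L_def by (simp add: lc_apply_append lc_apply_suffix)
  qed
qed

lemma Cons_canon_word:
  assumes U: "open U"
  shows "\<exists>Lw. (\<forall>(c,v)\<in>set Lw. num_Par v = num_Par (x # canon_word a b) \<and> num_Rot v <
      num_Rot (x # canon_word a b) \<and> length v < length (x # canon_word a b)) \<and>
    (\<forall>G. smooth_on U G \<longrightarrow> (\<forall>z\<in>U. word_apply (x # canon_word a b) G z =
        word_apply (canon_word (count_Par (x # canon_word a b)) (count_Rot (x # canon_word a b))) G z + lc_apply Lw
        G z))"
proof (cases x)
  case (Par m)
  have e: "count_Par (x # canon_word a b) = a(m := a m + 1)" "count_Rot (x # canon_word a b) = b"
    by (auto simp: fun_eq_iff count_Par_Cons count_Rot_Cons Par)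
  show ?thesis
  proof (intro exI[of _ "[]"] conjI allI impI ballI)
    fix G z assume G: "smooth_on U G" and z: "z \<in> U"
    show "word_apply (x # canon_word a b) G z = word_apply (canon_word (count_Par (x # canon_word a b)) (count_Rot
        (x # canon_word a b))) G z + lc_apply [] G z"
      unfolding e using pd_par_word[OF U smooth_on_word_apply[OF U G] z, of m a "rot_word b"] by (simp add: Par
          canon_word_def word_apply_append)
  qed simp
next
  case (Rot i)
  have e: "count_Par (x # canon_word a b) = a" "count_Rot (x # canon_word a b) = b(i := b i + 1)"
    by (auto simp: fun_eq_iff count_Par_Cons count_Rot_Cons Rot)
  obtain L where L: "\<forall>(c,v)\<in>set L. num_Par v = mlen a \<and> num_Rot v = mlen b \<and> length v = mlen
      a + mlen b"
    "\<And>G z. smooth_on U G \<Longrightarrow> z \<in> U \<Longrightarrow> rd i (word_apply (canon_word a b) G) z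
        = word_apply (canon_word a (b(i := b i + 1))) G z + lc_apply L G z"
    using rd_canon_word[OF U, of a b i] by blast
  have L1: "\<forall>(c,v)\<in>set L. num_Par v = num_Par (x # canon_word a b) \<and> num_Rot v < num_Rot (x #
      canon_word a b) \<and> length v < length (x # canon_word a b)"
    using L(1) by (auto simp: Rot)
  show ?thesis
    unfolding e by (intro exI[of _ L] conjI[OF L1] allI impI ballI) (use L(2) in \<open>simp add: Rot\<close>)
qed

definition canonical_lc :: "nat \<Rightarrow> nat \<Rightarrow> lincomb \<Rightarrow> bool" where
  "canonical_lc p r L \<longleftrightarrow> (\<forall>(c,v)\<in>set L. \<exists>a b. v = canon_word a b \<and> mlen
      a = p \<and> mlen b < r)"

lemma canonical_lc_append: "canonical_lc p r (L1 @ L2) \<longleftrightarrow> canonical_lc p r L1 \<and>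
    canonical_lc p r L2"
  unfolding canonical_lc_def set_append ball_Un by blast
lemma canonical_lc_scale: "canonical_lc p r L \<Longrightarrow> canonical_lc p r (lc_scale d L)"
  unfolding canonical_lc_def lc_scale_def by auto
lemma canonical_lc_mono: "canonical_lc p r L \<Longrightarrow> r \<le> r' \<Longrightarrow> canonical_lc p r' L"
  unfolding canonical_lc_def by fastforce
lemma canonical_lc_Nil[simp]: "canonical_lc p r []" unfolding canonical_lc_def by simp

definition canonical_rep :: "(real^3) set \<Rightarrow> nat \<Rightarrow> nat \<Rightarrow> ((real^3 \<Rightarrow>
    real) \<Rightarrow> real^3 \<Rightarrow> real) \<Rightarrow> bool" where
  "canonical_rep U p r F \<longleftrightarrow> (\<exists>L. canonical_lc p r L \<and> (\<forall>G. smooth_on U G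
      \<longrightarrow> (\<forall>z\<in>U. F G z = lc_apply L G z)))"

lemma canonical_rep_lc_apply:
  "(\<forall>(c,v)\<in>set Lw. canonical_rep U p r (word_apply v)) \<Longrightarrow> canonical_rep U p r (lc_apply Lw)"
proof (induction Lw)
  case Nil thus ?case unfolding canonical_rep_def by (intro exI[of _ "[]"]) auto
next
  case (Cons cv Lw)
  obtain c v where cv: "cv = (c, v)" by fastforce
  obtain L1 where L1: "canonical_lc p r L1" "\<And>G z. smooth_on U G \<Longrightarrow> z \<in> U \<Longrightarrow>
      word_apply v G z = lc_apply L1 G z"
    using Cons.prems cv unfolding canonical_rep_def by auto
  obtain L2 where L2: "canonical_lc p r L2" "\<And>G z. smooth_on U G \<Longrightarrow> z \<in> U \<Longrightarrow>
      lc_apply Lw G z = lc_apply L2 G z"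
    using Cons unfolding canonical_rep_def by auto
  show ?case unfolding canonical_rep_def
    by (intro exI[of _ "lc_scale c L1 @ L2"] conjI allI impI ballI)
       (auto simp: canonical_lc_append canonical_lc_scale L1 L2 cv lc_apply_append lc_apply_scale)
qed

definition normal_form :: "(real^3) set \<Rightarrow> vf list \<Rightarrow> lincomb \<Rightarrow> bool" where
  "normal_form U w L \<longleftrightarrow> canonical_lc (num_Par w) (num_Rot w) L \<and>
     (\<forall>G. smooth_on U G \<longrightarrow> (\<forall>z\<in>U. word_apply w G z = word_apply (canon_word
         (count_Par w) (count_Rot w)) G z + lc_apply L G z))"

lemma canonical_rep_word:
  assumes v: "normal_form U v L" and "num_Par v = p" "num_Rot v < r"
  shows "canonical_rep U p r (word_apply v)"
proof -
  let ?c = "canon_word (count_Par v) (count_Rot v)"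
  have "canonical_lc p r [(1, ?c)]"
    unfolding canonical_lc_def using assms(2,3) mlen_count_Par[of v] mlen_count_Rot[of v] by force
  moreover have "canonical_lc p r L"
    using v assms(2,3) canonical_lc_mono[of p "num_Rot v" L r] unfolding normal_form_def by simp
  ultimately have "canonical_lc p r ((1, ?c) # L)"
    using canonical_lc_append[of p r "[(1, ?c)]" L] by simp
  then show ?thesis
    using v unfolding canonical_rep_def normal_form_def by (intro exI[of _ "(1, ?c) # L"]) auto
qed

lemma word_apply_Cons_normal_form:
  assumes U: "open U" and w: "normal_form U w L" and G: "smooth_on U G" and z: "z \<in> U"
  shows "word_apply (x # w) G z
    = word_apply (x # canon_word (count_Par w) (count_Rot w)) G z + lc_apply (lc_prefix [x] L) G z"
proof -
  let ?c = "canon_word (count_Par w) (count_Rot w)"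
  have "word_apply w G z' = word_apply ?c G z' + lc_apply L G z'" if "z' \<in> U" for z'
    using w G that unfolding normal_form_def by blast
  then have "word_apply (x # w) G z = word_apply [x] (\<lambda>z. word_apply ?c G z + lc_apply L G z) z"
    using word_apply_cong_open[OF U _ z, of "word_apply w G" _ "[x]"] by simp
  also have "\<dots> = word_apply [x] (word_apply ?c G) z + word_apply [x] (lc_apply L G) z"
    by (rule word_apply_add[OF U smooth_on_word_apply[OF U G] smooth_on_lc_apply[OF U G] z])
  also have "\<dots> = word_apply (x # ?c) G z + lc_apply (lc_prefix [x] L) G z"
    using word_apply_lc_apply[OF U G z, of "[x]" L] by simp
  finally show ?thesis .
qed

lemma normal_form_Cons:
  assumes U: "open U" and IH: "\<And>v. length v < length (x # w) \<Longrightarrow> \<exists>L. normal_form U v L"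
  shows "\<exists>L. normal_form U (x # w) L"
proof -
  define c where "c = canon_word (count_Par w) (count_Rot w)"
  obtain L' where L': "normal_form U w L'" using IH[of w] by auto
  obtain Lw where Lw: "\<forall>(c',v)\<in>set Lw. num_Par v = num_Par (x # c) \<and> num_Rot v < num_Rot (x # c)
      \<and> length v < length (x # c)"
    "\<And>G z. smooth_on U G \<Longrightarrow> z \<in> U \<Longrightarrow> word_apply (x # c) G z = word_apply
        (canon_word (count_Par (x # c)) (count_Rot (x # c))) G z + lc_apply Lw G z"
    unfolding c_def using Cons_canon_word[OF U, of x "count_Par w" "count_Rot w"] by blast
  have c1: "num_Par (x # c) = num_Par (x # w)" "num_Rot (x # c) = num_Rot (x # w)" "length (x # c) = length (x # w)"
    using length_eq_num_Par_Rot[of w] by (auto simp: c_def mlen_count_Par mlen_count_Rot)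
  have c2: "count_Par (x # c) = count_Par (x # w)" "count_Rot (x # c) = count_Rot (x # w)"
    by (auto simp: c_def count_Par_Cons count_Rot_Cons)
  have rep: "canonical_rep U (num_Par (x # w)) (num_Rot (x # w)) (word_apply v)"
    if v: "length v < length (x # w)" "num_Par v = num_Par (x # w)" "num_Rot v < num_Rot (x # w)" for v
  proof -
    obtain L where "normal_form U v L" using IH[OF v(1)] by blast
    then show ?thesis by (rule canonical_rep_word) (use v in auto)
  qed
  have "canonical_rep U (num_Par (x # w)) (num_Rot (x # w)) (lc_apply Lw)"
  proof (rule canonical_rep_lc_apply, intro ballI)
    fix cv assume cv: "cv \<in> set Lw"
    obtain c' v where cv': "cv = (c', v)" by fastforce
    have "canonical_rep U (num_Par (x # w)) (num_Rot (x # w)) (word_apply v)"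
      by (rule rep) (use Lw(1) cv cv' c1 in auto)
    then show "case cv of (c', v) \<Rightarrow> canonical_rep U (num_Par (x # w)) (num_Rot (x # w)) (word_apply v)"
      using cv' by simp
  qed
  then obtain L1 where L1: "canonical_lc (num_Par (x # w)) (num_Rot (x # w)) L1"
    "\<And>G z. smooth_on U G \<Longrightarrow> z \<in> U \<Longrightarrow> lc_apply Lw G z = lc_apply L1 G z"
    unfolding canonical_rep_def by auto
  have "canonical_rep U (num_Par (x # w)) (num_Rot (x # w)) (lc_apply (lc_prefix [x] L'))"
  proof (rule canonical_rep_lc_apply, intro ballI)
    fix cv assume "cv \<in> set (lc_prefix [x] L')"
    then obtain c' v where cv: "cv = (c', x # v)" "(c', v) \<in> set L'" unfolding lc_prefix_def by auto
    then obtain a b where "v = canon_word a b" "mlen a = num_Par w" "mlen b < num_Rot w"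
      using L' unfolding normal_form_def canonical_lc_def by fastforce
    then have "canonical_rep U (num_Par (x # w)) (num_Rot (x # w)) (word_apply (x # v))"
      by (intro rep) (use length_eq_num_Par_Rot[of w] in auto)
    then show "case cv of (c', v) \<Rightarrow> canonical_rep U (num_Par (x # w)) (num_Rot (x # w)) (word_apply v)"
      using cv by simp
  qed
  then obtain L2 where L2: "canonical_lc (num_Par (x # w)) (num_Rot (x # w)) L2"
    "\<And>G z. smooth_on U G \<Longrightarrow> z \<in> U \<Longrightarrow> lc_apply (lc_prefix [x] L') G z =
        lc_apply L2 G z"
    unfolding canonical_rep_def by auto
  have "word_apply (x # w) G z
      = word_apply (canon_word (count_Par (x # w)) (count_Rot (x # w))) G z + lc_apply (L1 @ L2) G z"
    if "smooth_on U G" and "z \<in> U" for G z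
    using word_apply_Cons_normal_form[OF U L' that, of x] Lw(2)[OF that] L1(2)[OF that] L2(2)[OF that] c2
    unfolding c_def by (simp add: lc_apply_append)
  then show ?thesis
    using L1(1) L2(1) unfolding normal_form_def by (intro exI[of _ "L1 @ L2"]) (simp add: canonical_lc_append)
qed

lemma normal_order:
  assumes U: "open U"
  shows "\<exists>L. normal_form U w L"
proof (induction "length w" arbitrary: w rule: less_induct)
  case less
  show ?case
  proof (cases w)
    case Nil
    then show ?thesis
      unfolding normal_form_def by (intro exI[of _ "[]"]) (auto simp: canon_word_def par_word_def rot_word_def)
  next
    case (Cons x w')
    then show ?thesis using normal_form_Cons[OF U] less by blast
  qed
qed
section \<open>Bounds by canonical derivatives\<close>

definition absD_sum :: "nat \<Rightarrow> nat \<Rightarrow> (real^3 \<Rightarrow> real) \<Rightarrow> real^3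
    \<Rightarrow> real" where
  "absD_sum p r f y = (\<Sum>j<r. absD p j f y)"

definition bounded_by :: "(real^3) set \<Rightarrow> nat \<Rightarrow> nat \<Rightarrow> ((real^3 \<Rightarrow>
    real) \<Rightarrow> real^3 \<Rightarrow> real) \<Rightarrow> bool" where
  "bounded_by U p r F \<longleftrightarrow> (\<exists>K. \<forall>f. smooth_on U f \<longrightarrow>
      (\<forall>y\<in>U. \<bar>F f y\<bar> \<le> K * absD_sum p r f y))"

definition bounded_by_scaled :: "(real^3) set \<Rightarrow> nat \<Rightarrow> nat \<Rightarrow> nat \<Rightarrow>
    ((real^3 \<Rightarrow> real) \<Rightarrow> real^3 \<Rightarrow> real) \<Rightarrow> bool" where
  "bounded_by_scaled U n p r F \<longleftrightarrow> (\<exists>K. \<forall>f. smooth_on U f \<longrightarrow>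
      (\<forall>y\<in>U. \<bar>F f y\<bar> \<le> K * real n * absD_sum p r f y))"

lemma absD_nonneg: "absD p j f y \<ge> 0"
  unfolding absD_def by (intro sum_nonneg) auto

lemma absD_sum_nonneg: "absD_sum p r f y \<ge> 0"
  unfolding absD_sum_def by (intro sum_nonneg absD_nonneg)

lemma le_mlen: "a i \<le> mlen a"
  unfolding mlen_def by (rule member_le_sum) auto

lemma finite_mlen: "finite {a :: 3 \<Rightarrow> nat. mlen a = p}"
proof -
  have "{a :: 3 \<Rightarrow> nat. mlen a = p} \<subseteq> Pi\<^sub>E UNIV (\<lambda>_. {..p})"
    using le_mlen by (auto simp: PiE_UNIV_domain)
  moreover have "finite (Pi\<^sub>E (UNIV :: 3 set) (\<lambda>_. {..p}))" by (rule finite_PiE) auto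
  ultimately show ?thesis by (rule finite_subset)
qed

lemma dpow_le_absD: "mlen a = p \<Longrightarrow> \<bar>dpow a (rpow b f) y\<bar> \<le> absD p (mlen b) f y"
proof -
  assume a: "mlen a = p"
  have "\<bar>dpow a (rpow b f) y\<bar> \<le> (\<Sum>b'\<in>{b'. mlen b' = mlen b}. \<bar>dpow a (rpow b' f) y\<bar>)"
    by (rule member_le_sum[where f="\<lambda>b'. \<bar>dpow a (rpow b' f) y\<bar>"]) (auto intro: finite_mlen)
  also have "\<dots> \<le> absD p (mlen b) f y"
    unfolding absD_def
    by (rule member_le_sum[where f="\<lambda>a'. \<Sum>b'\<in>{b'. mlen b' = mlen b}. \<bar>dpow a' (rpow b' f)
        y\<bar>"])
       (use a in \<open>auto intro: finite_mlen sum_nonneg\<close>)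
  finally show ?thesis .
qed

lemma canon_word_le_absD_sum: "mlen a = p \<Longrightarrow> mlen b < r \<Longrightarrow> \<bar>word_apply
    (canon_word a b) f y\<bar> \<le> absD_sum p r f y"
proof -
  assume a: "mlen a = p" and b: "mlen b < r"
  have "\<bar>word_apply (canon_word a b) f y\<bar> \<le> absD p (mlen b) f y" unfolding word_apply_canon_word by
      (rule dpow_le_absD[OF a])
  also have "\<dots> \<le> absD_sum p r f y" unfolding absD_sum_def
    by (rule member_le_sum[where f="\<lambda>j. absD p j f y"]) (use b in \<open>auto intro: absD_nonneg\<close>)
  finally show ?thesis .
qed

lemma lc_apply_le: "canonical_lc p r L \<Longrightarrow> \<bar>lc_apply L f y\<bar> \<le>
    (\<Sum>(c,v)\<leftarrow>L. \<bar>c\<bar>) * absD_sum p r f y"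
proof (induction L)
  case (Cons cv L)
  obtain c v where cv: "cv = (c, v)" by fastforce
  obtain a b where ab: "v = canon_word a b" "mlen a = p" "mlen b < r" using Cons.prems cv unfolding
      canonical_lc_def by auto
  have gL: "canonical_lc p r L" using Cons.prems unfolding canonical_lc_def by auto
  have "\<bar>lc_apply (cv # L) f y\<bar> \<le> \<bar>c\<bar> * \<bar>word_apply v f y\<bar> + \<bar>lc_apply L f
      y\<bar>"
    by (simp add: cv abs_mult[symmetric] abs_triangle_ineq)
  also have "\<dots> \<le> \<bar>c\<bar> * absD_sum p r f y + (\<Sum>(c,v)\<leftarrow>L. \<bar>c\<bar>) * absD_sum
      p r f y"
    using canon_word_le_absD_sum[OF ab(2,3), of f y] Cons.IH[OF gL] ab(1) by (intro add_mono mult_left_mono) auto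
  finally show ?case by (simp add: cv algebra_simps)
qed simp

lemma canonical_rep_bounded: "canonical_rep U p r F \<Longrightarrow> bounded_by U p r F"
  unfolding canonical_rep_def bounded_by_def using lc_apply_le by metis

lemma bounded_by_add: assumes "bounded_by U p r F" "bounded_by U p r H" shows "bounded_by U p r (\<lambda>f y. F f
    y + H f y)"
proof -
  obtain K1 where K1: "\<And>f y. smooth_on U f \<Longrightarrow> y \<in> U \<Longrightarrow> \<bar>F f y\<bar>
      \<le> K1 * absD_sum p r f y" using assms(1) unfolding bounded_by_def by blast
  obtain K2 where K2: "\<And>f y. smooth_on U f \<Longrightarrow> y \<in> U \<Longrightarrow> \<bar>H f y\<bar>
      \<le> K2 * absD_sum p r f y" using assms(2) unfolding bounded_by_def by blast
  show ?thesis unfolding bounded_by_def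
    by (rule exI[of _ "K1 + K2"]) (auto simp: algebra_simps intro!: order_trans[OF abs_triangle_ineq] add_mono K1 K2)
qed

lemma bounded_by_coef: assumes "bounded_by U p r F" "\<And>y. y \<in> U \<Longrightarrow> \<bar>c y\<bar> \<le> M"
    shows "bounded_by U p r (\<lambda>f y. c y * F f y)"
proof -
  obtain K where K: "\<And>f y. smooth_on U f \<Longrightarrow> y \<in> U \<Longrightarrow> \<bar>F f y\<bar> \<le>
      K * absD_sum p r f y" using assms(1) unfolding bounded_by_def by blast
  have "\<bar>c y * F f y\<bar> \<le> (\<bar>M\<bar> * K) * absD_sum p r f y" if "smooth_on U f" "y \<in> U" for f y
  proof -
    have "\<bar>c y * F f y\<bar> = \<bar>c y\<bar> * \<bar>F f y\<bar>" by (simp add: abs_mult)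
    also have "\<dots> \<le> \<bar>M\<bar> * (K * absD_sum p r f y)"
      by (rule mult_mono) (use assms(2)[of y] K[OF that] that in auto)
    finally show ?thesis by (simp add: algebra_simps)
  qed
  thus ?thesis unfolding bounded_by_def by blast
qed

lemma bounded_by_cmult: "bounded_by U p r F \<Longrightarrow> bounded_by U p r (\<lambda>f y. c * F f y)"
  using bounded_by_coef[of U p r F "\<lambda>y. c" "\<bar>c\<bar>"] by simp

lemma bounded_by_zero: "bounded_by U p r (\<lambda>f y. 0)"
  unfolding bounded_by_def by (rule exI[of _ 0]) simp

lemma bounded_by_diff: "bounded_by U p r F \<Longrightarrow> bounded_by U p r H \<Longrightarrow> bounded_by U p r
    (\<lambda>f y. F f y - H f y)"
  using bounded_by_add[of U p r F "\<lambda>f y. (-1) * H f y"] bounded_by_cmult[of U p r H "-1"] by simp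

lemma bounded_by_sum_list: "(\<And>v. v \<in> set L \<Longrightarrow> bounded_by U p r (H v)) \<Longrightarrow>
    bounded_by U p r (\<lambda>f y. \<Sum>v\<leftarrow>L. H v f y)"
proof (induction L)
  case Nil thus ?case using bounded_by_zero by simp
next
  case (Cons v L)
  thus ?case using bounded_by_add[of U p r "H v" "\<lambda>f y. \<Sum>v\<leftarrow>L. H v f y"] by simp
qed

lemma bounded_by_sum3: "(\<And>l. bounded_by U p r (H l)) \<Longrightarrow> bounded_by U p r (\<lambda>f y.
    \<Sum>l\<in>(UNIV::3 set). H l f y)"
  unfolding sum_3 by (intro bounded_by_add) auto

lemma word_bounded:
  assumes U: "open U" and "num_Par w = p" "num_Rot w < r"
  shows "bounded_by U p r (word_apply w)"
proof -
  obtain L where "normal_form U w L" using normal_order[OF U] by blast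
  then show ?thesis by (intro canonical_rep_bounded canonical_rep_word) (use assms in auto)
qed

lemma word_diff_bounded:
  assumes U: "open U" and "count_Par w1 = count_Par w2" "count_Rot w1 = count_Rot w2" "num_Par w1 = p" "num_Rot w1
      \<le> r"
  shows "bounded_by U p r (\<lambda>f y. word_apply w1 f y - word_apply w2 f y)"
proof -
  obtain L1 L2 where L1: "normal_form U w1 L1" and L2: "normal_form U w2 L2"
    using normal_order[OF U] by blast
  have "num_Par w2 = num_Par w1" "num_Rot w2 = num_Rot w1"
    using assms(2,3) mlen_count_Par mlen_count_Rot by metis+
  then have "canonical_lc p r L1" "canonical_lc p r L2"
    using L1 L2 canonical_lc_mono[of p "num_Rot w1" _ r] assms(4,5) unfolding normal_form_def by auto
  then have "canonical_lc p r (L1 @ lc_scale (-1) L2)"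
    by (simp add: canonical_lc_append canonical_lc_scale)
  moreover have "word_apply w1 G z - word_apply w2 G z = lc_apply (L1 @ lc_scale (-1) L2) G z"
    if "smooth_on U G" "z \<in> U" for G z
    using L1 L2 that assms(2,3) unfolding normal_form_def by (simp add: lc_apply_append lc_apply_scale)
  ultimately show ?thesis
    unfolding canonical_rep_def by (intro canonical_rep_bounded) (unfold canonical_rep_def, blast)
qed

lemma lc_apply_bounded:
  assumes U: "open U" and "\<forall>(c,v)\<in>set L. num_Par v = p \<and> num_Rot v < r"
  shows "bounded_by U p r (lc_apply L)"
  using assms(2)
proof (induction L)
  case Nil thus ?case using bounded_by_zero[of U p r] by simp
next
  case (Cons cv L)
  obtain c v where cv: "cv = (c, v)" by fastforce
  have "bounded_by U p r (\<lambda>f y. c * word_apply v f y + lc_apply L f y)"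
    using Cons cv by (intro bounded_by_add bounded_by_cmult word_bounded[OF U]) auto
  thus ?case by (simp add: cv)
qed

lemma bounded_by_scaled_add: assumes "bounded_by_scaled U n p r F" "bounded_by_scaled U n p r H" shows
    "bounded_by_scaled U n p r (\<lambda>f y. F f y + H f y)"
proof -
  obtain K1 where K1: "\<And>f y. smooth_on U f \<Longrightarrow> y \<in> U \<Longrightarrow> \<bar>F f y\<bar>
      \<le> K1 * real n * absD_sum p r f y" using assms(1) unfolding bounded_by_scaled_def by blast
  obtain K2 where K2: "\<And>f y. smooth_on U f \<Longrightarrow> y \<in> U \<Longrightarrow> \<bar>H f y\<bar>
      \<le> K2 * real n * absD_sum p r f y" using assms(2) unfolding bounded_by_scaled_def by blast
  have "\<bar>F f y + H f y\<bar> \<le> (K1 + K2) * real n * absD_sum p r f y" if "smooth_on U f" "y \<in> U" for f y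
  proof -
    have "\<bar>F f y + H f y\<bar> \<le> \<bar>F f y\<bar> + \<bar>H f y\<bar>" by (rule abs_triangle_ineq)
    also have "\<dots> \<le> K1 * real n * absD_sum p r f y + K2 * real n * absD_sum p r f y" by (intro add_mono K1
        K2 that)
    finally show ?thesis by (simp add: algebra_simps)
  qed
  thus ?thesis unfolding bounded_by_scaled_def by blast
qed

lemma bounded_by_scaled_cmult: assumes "bounded_by_scaled U n p r F" shows "bounded_by_scaled U n p r (\<lambda>f
    y. c * F f y)"
proof -
  obtain K where K: "\<And>f y. smooth_on U f \<Longrightarrow> y \<in> U \<Longrightarrow> \<bar>F f y\<bar> \<le>
      K * real n * absD_sum p r f y" using assms unfolding bounded_by_scaled_def by blast
  have "\<bar>c * F f y\<bar> \<le> (\<bar>c\<bar> * K) * real n * absD_sum p r f y" if "smooth_on U f" "y \<in> U"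
      for f y
    using mult_left_mono[OF K[OF that], of "\<bar>c\<bar>"] by (simp add: abs_mult algebra_simps)
  thus ?thesis unfolding bounded_by_scaled_def by blast
qed

lemma bounded_by_scaled_diff: "bounded_by_scaled U n p r F \<Longrightarrow> bounded_by_scaled U n p r H
    \<Longrightarrow> bounded_by_scaled U n p r (\<lambda>f y. F f y - H f y)"
  using bounded_by_scaled_add[of U n p r F "\<lambda>f y. (-1) * H f y"] bounded_by_scaled_cmult[of U n p r H "-1"]
      by simp

lemma bounded_by_scaled_sum3: "(\<And>l. bounded_by_scaled U n p r (H l)) \<Longrightarrow> bounded_by_scaled U n p
    r (\<lambda>f y. \<Sum>l\<in>(UNIV::3 set). H l f y)"
  unfolding sum_3 by (intro bounded_by_scaled_add) auto

lemma bounded_by_scaled_sum_list: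
  assumes "\<And>v. v \<in> set L \<Longrightarrow> bounded_by U p r (H v)" and "L \<noteq> [] \<Longrightarrow> n
      \<ge> 1"
  shows "bounded_by_scaled U n p r (\<lambda>f y. \<Sum>v\<leftarrow>L. H v f y)"
proof (cases "L = []")
  case True thus ?thesis unfolding bounded_by_scaled_def by (intro exI[of _ 0]) simp
next
  case False
  obtain K where K: "\<And>f y. smooth_on U f \<Longrightarrow> y \<in> U \<Longrightarrow>
      \<bar>\<Sum>v\<leftarrow>L. H v f y\<bar> \<le> K * absD_sum p r f y"
    using bounded_by_sum_list[of L U p r H] assms(1) unfolding bounded_by_def by blast
  have n: "real n \<ge> 1" using assms(2) False by simp
  have "\<bar>\<Sum>v\<leftarrow>L. H v f y\<bar> \<le> \<bar>K\<bar> * real n * absD_sum p r f y" if "smooth_on U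
      f" "y \<in> U" for f y
  proof -
    have "K * absD_sum p r f y \<le> \<bar>K\<bar> * absD_sum p r f y" by (rule mult_right_mono) (auto simp:
        absD_sum_nonneg)
    also have "\<dots> \<le> \<bar>K\<bar> * (real n * absD_sum p r f y)"
    proof (rule mult_left_mono)
      have "1 * absD_sum p r f y \<le> real n * absD_sum p r f y" by (rule mult_right_mono) (use n
          absD_sum_nonneg[of p r f y] in auto)
      thus "absD_sum p r f y \<le> real n * absD_sum p r f y" by simp
    qed simp
    finally show ?thesis using K[OF that] by (simp add: algebra_simps)
  qed
  thus ?thesis unfolding bounded_by_scaled_def by blast
qed

section \<open>Leibniz rules for the coordinates and the weight\<close>

fun drop_Par :: "3 \<Rightarrow> vf list \<Rightarrow> vf list list" where
  "drop_Par l [] = []"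
| "drop_Par l (x # u) = (if x = Par l then [u] else []) @ map (\<lambda>v. x # v) (drop_Par l u)"

lemma drop_Par_props: "\<forall>x\<in>set u. is_Par x \<Longrightarrow> v \<in> set (drop_Par l u) \<Longrightarrow>
   (\<forall>x\<in>set v. is_Par x) \<and> Suc (length v) = length u \<and> count_Par u = (\<lambda>m. count_Par v
       m + (if m = l then 1 else 0)) \<and> count_Rot v = count_Rot u"
proof (induction u arbitrary: v)
  case (Cons x u)
  show ?case
  proof (cases "v = u \<and> x = Par l")
    case True thus ?thesis using Cons.prems by (auto simp: count_Par_Cons count_Rot_Cons fun_eq_iff)
  next
    case False
    then obtain v0 where "v = x # v0" "v0 \<in> set (drop_Par l u)" using Cons.prems(2) by (auto split: if_splits)
    thus ?thesis using Cons.IH[of v0] Cons.prems(1) by (auto simp: count_Par_Cons count_Rot_Cons fun_eq_iff)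
  qed
qed simp

lemma length_drop_Par: "length (drop_Par l u) = count_Par u l"
  by (induction u) (auto simp: count_Par_Cons)

lemma lc_apply_ones: "lc_apply (map (\<lambda>v. (1, h v)) L) W y = (\<Sum>v\<leftarrow>L. word_apply (h v) W y)"
  by (induction L) auto

lemma pd_coord_times: "W differentiable at y \<Longrightarrow> pd m (\<lambda>z. z$l * W z) y = y$l * pd m W y +
    (if m = l then W y else 0)"
  using pd_mult[of "\<lambda>z. z$l" y W m] by simp

lemma par_word_coord_mult:
  assumes U: "open U" and W: "smooth_on U W"
  shows "\<forall>x\<in>set u. is_Par x \<Longrightarrow> y \<in> U \<Longrightarrow> word_apply u (\<lambda>z. z$l
      * W z) y = y$l * word_apply u W y + (\<Sum>v\<leftarrow>drop_Par l u. word_apply v W y)"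
proof (induction u arbitrary: y)
  case Nil thus ?case by simp
next
  case (Cons x u)
  obtain m where x: "x = Par m" using Cons.prems by (cases x) auto
  have sY: "smooth_on U (\<lambda>z. z$l * word_apply u W z)" by (rule smooth_on_mult[OF U smooth_on_coord
      smooth_on_word_apply[OF U W]])
  have "word_apply (x # u) (\<lambda>z. z$l * W z) y = word_apply [Par m] (\<lambda>z. z$l * word_apply u W z +
      lc_apply (map (\<lambda>v. (1, v)) (drop_Par l u)) W z) y"
    using word_apply_cong_open[OF U _ Cons.prems(2), where w="[Par m]" and g="word_apply u (\<lambda>z. z$l * W
        z)"] Cons.IH Cons.prems(1)
    by (simp add: x lc_apply_ones)
  also have "\<dots> = word_apply [Par m] (\<lambda>z. z$l * word_apply u W z) y + word_apply [Par m] (lc_apply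
      (map (\<lambda>v. (1, v)) (drop_Par l u)) W) y"
    by (rule word_apply_add[OF U sY smooth_on_lc_apply[OF U W] Cons.prems(2)])
  also have "word_apply [Par m] (lc_apply (map (\<lambda>v. (1, v)) (drop_Par l u)) W) y =
      (\<Sum>v\<leftarrow>drop_Par l u. word_apply (Par m # v) W y)"
    using word_apply_lc_apply[OF U W Cons.prems(2), of "[Par m]"] by (simp add: lc_prefix_def comp_def lc_apply_ones)
  also have "word_apply [Par m] (\<lambda>z. z$l * word_apply u W z) y = y$l * word_apply (x # u) W y + (if m = l
      then word_apply u W y else 0)"
    using pd_coord_times[OF smooth_on_differentiable_at[OF U smooth_on_word_apply[OF U W] Cons.prems(2)]] by (simp
        add: x)
  finally show ?case by (simp add: x comp_def)
qed

lemma word_apply_sum: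
  assumes U: "open U" and "finite S" and "\<And>x. x \<in> S \<Longrightarrow> smooth_on U (F x)" and y: "y \<in> U"
  shows "word_apply u (\<lambda>z. \<Sum>x\<in>S. F x z) y = (\<Sum>x\<in>S. word_apply u (F x) y)"
  using assms(2,3)
proof (induction S rule: finite_induct)
  case empty
  then show ?case by (simp add: word_apply_zero)
next
  case (insert a S)
  have "word_apply u (\<lambda>z. F a z + (\<Sum>x\<in>S. F x z)) y = word_apply u (F a) y + word_apply u
      (\<lambda>z. \<Sum>x\<in>S. F x z) y"
    by (rule word_apply_add[OF U _ smooth_on_sum[OF U insert(1)] y]) (use insert in auto)
  then show ?case using insert by simp
qed

lemma word_apply_lin2:
  assumes U: "open U" and F: "smooth_on U F" and H: "smooth_on U H" and y: "y \<in> U"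
  shows "word_apply u (\<lambda>z. c * F z + d * H z) y = c * word_apply u F y + d * word_apply u H y"
  using word_apply_add[OF U smooth_on_cmult[OF U F] smooth_on_cmult[OF U H] y, of u] word_apply_cmult[OF U F y]
      word_apply_cmult[OF U H y] by simp

lemma par_word_sig_mult:
  assumes U: "open U" and W: "smooth_on U W" and u: "\<forall>x\<in>set u. is_Par x" and y: "y \<in> U"
  shows "word_apply u (\<lambda>z. sig A B z * W z) y = sig A B y * word_apply u W y
     - 2 * B * (\<Sum>l\<in>UNIV. y$l * (\<Sum>v\<leftarrow>drop_Par l u. word_apply v W y))
     - B * (\<Sum>l\<in>UNIV. \<Sum>v\<leftarrow>drop_Par l u. \<Sum>v'\<leftarrow>drop_Par l v. word_apply v' W y)"
proof -
  define YY where "YY l z = z$l * (z$l * W z)" for l z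
  have sYY: "smooth_on U (YY l)" for l unfolding YY_def by (intro smooth_on_mult[OF U] smooth_on_coord W)
  have e0: "(\<lambda>z. sig A B z * W z) = (\<lambda>z. A * W z + (- B) * (\<Sum>l\<in>UNIV. YY l z))"
    by (rule ext) (simp add: sig_eq_coords YY_def sum_3 algebra_simps)
  have YYe: "word_apply u (YY l) y = y$l * (y$l * word_apply u W y + (\<Sum>v\<leftarrow>drop_Par l u. word_apply v
      W y))
      + (\<Sum>v\<leftarrow>drop_Par l u. y$l * word_apply v W y + (\<Sum>v'\<leftarrow>drop_Par l v. word_apply v'
          W y))" for l
  proof -
    have sW: "smooth_on U (\<lambda>z. z$l * W z)" by (intro smooth_on_mult[OF U] smooth_on_coord W)
    have "word_apply u (YY l) y = y$l * word_apply u (\<lambda>z. z$l * W z) y + (\<Sum>v\<leftarrow>drop_Par l u.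
        word_apply v (\<lambda>z. z$l * W z) y)"
      unfolding YY_def by (rule par_word_coord_mult[OF U sW u y])
    also have "word_apply u (\<lambda>z. z$l * W z) y = y$l * word_apply u W y + (\<Sum>v\<leftarrow>drop_Par l u.
        word_apply v W y)"
      by (rule par_word_coord_mult[OF U W u y])
    also have "(\<Sum>v\<leftarrow>drop_Par l u. word_apply v (\<lambda>z. z$l * W z) y) =
        (\<Sum>v\<leftarrow>drop_Par l u. y$l * word_apply v W y + (\<Sum>v'\<leftarrow>drop_Par l v. word_apply v'
        W y))"
      by (rule arg_cong[of _ _ sum_list], rule map_cong[OF refl], rule par_word_coord_mult[OF U W _ y])
         (use drop_Par_props[OF u] in blast)
    finally show ?thesis .
  qed
  have "word_apply u (\<lambda>z. sig A B z * W z) y = A * word_apply u W y + (- B) * word_apply u (\<lambda>z.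
      \<Sum>l\<in>UNIV. YY l z) y"
    unfolding e0 by (rule word_apply_lin2[OF U W smooth_on_sum[OF U finite_class.finite_UNIV sYY] y])
  also have "word_apply u (\<lambda>z. \<Sum>l\<in>UNIV. YY l z) y = (\<Sum>l\<in>UNIV. word_apply u (YY l) y)"
    by (rule word_apply_sum[OF U finite_class.finite_UNIV sYY y])
  also have "\<dots> = (\<Sum>l\<in>UNIV. y$l * (y$l * word_apply u W y + (\<Sum>v\<leftarrow>drop_Par l u.
      word_apply v W y))
      + (\<Sum>v\<leftarrow>drop_Par l u. y$l * word_apply v W y + (\<Sum>v'\<leftarrow>drop_Par l v. word_apply v'
          W y)))"
    by (simp add: YYe)
  finally have E: "word_apply u (\<lambda>z. sig A B z * W z) y = A * word_apply u W y + - B * (\<Sum>l\<in>UNIV.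
      y$l * (y$l * word_apply u W y + (\<Sum>v\<leftarrow>drop_Par l u. word_apply v W y))
      + (\<Sum>v\<leftarrow>drop_Par l u. y$l * word_apply v W y + (\<Sum>v'\<leftarrow>drop_Par l v. word_apply v'
          W y)))" .
  show ?thesis unfolding E sig_eq_coords[of A B y]
    by (simp add: sum_3 sum_list_addf sum_list_const_mult algebra_simps)
qed

lemma pd_sig: "pd k (sig A B) y = -2 * B * y$k"
proof -
  have e: "(\<lambda>t. sig A B (y + t *\<^sub>R unit_vec k)) = (\<lambda>t. A - B * (inner y y + 2 * t * y$k + t*t))"
    by (rule ext) (simp add: sig_def power2_norm_eq_inner inner_add_left inner_add_right inner_axis inner_axis'
        inner_axis_axis algebra_simps)
  have "((\<lambda>t. A - B * (inner y y + 2 * t * y$k + t*t)) has_real_derivative -2*B*y$k) (at 0)"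
    by (auto intro!: derivative_eq_intros)
  thus ?thesis unfolding pd_def e by (rule DERIV_imp_deriv)
qed

lemma rd_mult: assumes "F differentiable at y" "H differentiable at y"
  shows "rd i (\<lambda>z. F z * H z) y = F y * rd i H y + H y * rd i F y"
  unfolding rd_def using pd_mult[OF assms]
  by (simp add: sum_distrib_left sum.distrib[symmetric] algebra_simps)

lemma rd_sig: "rd i (sig A B) y = 0"
  unfolding rd_def pd_sig using exhaust_3[of i] by (auto simp: sum_3 levi_def algebra_simps)

lemma rd_coord: "rd i (\<lambda>z. z$l) y = (\<Sum>j\<in>UNIV. levi i j l * y$j)"
  unfolding rd_def using exhaust_3[of l] by (auto simp: sum_3 algebra_simps)

lemma sig_differentiable: "sig A B differentiable at y"
  using smooth_on_differentiable_at[OF open_UNIV smooth_on_sig[OF open_UNIV] UNIV_I] .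

lemma rot_word_sig_mult:
  assumes U: "open U" and W: "smooth_on U W"
  shows "\<forall>x\<in>set v. \<not> is_Par x \<Longrightarrow> y \<in> U \<Longrightarrow> word_apply v
      (\<lambda>z. sig A B z * W z) y = sig A B y * word_apply v W y"
proof (induction v arbitrary: y)
  case (Cons x v)
  obtain i where x: "x = Rot i" using Cons.prems by (cases x) auto
  have "word_apply (x # v) (\<lambda>z. sig A B z * W z) y = rd i (\<lambda>z. sig A B z * word_apply v W z) y"
    using rd_cong_open[OF U _ Cons.prems(2), of "word_apply v (\<lambda>z. sig A B z * W z)" "\<lambda>z. sig A B z
        * word_apply v W z" i]
      Cons.IH Cons.prems(1) by (simp add: x)
  also have "\<dots> = sig A B y * word_apply (x # v) W y"
    using rd_mult[OF sig_differentiable smooth_on_differentiable_at[OF U smooth_on_word_apply[OF U W]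
        Cons.prems(2)]] rd_sig by (simp add: x)
  finally show ?case .
qed simp

lemma rd_coord_times: assumes "H differentiable at y"
  shows "rd i (\<lambda>z. z$l * H z) y = y$l * rd i H y + H y * (\<Sum>j\<in>UNIV. levi i j l * y$j)"
  using rd_mult[OF coord_differentiable assms] rd_coord by simp

definition coord_commutator :: "(real^3) set \<Rightarrow> vf list \<Rightarrow> 3 \<Rightarrow> (3 \<Rightarrow>
    lincomb) \<Rightarrow> bool" where
  "coord_commutator U v k M \<longleftrightarrow> (\<forall>W. smooth_on U W \<longrightarrow> (\<forall>y\<in>U.
     word_apply v (\<lambda>z. z$k * W z) y = y$k * word_apply v W y + (\<Sum>l\<in>UNIV. y$l * lc_apply (M l) W y)))"

lemma rot_word_coord_mult:
  assumes U: "open U"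
  shows "\<forall>x\<in>set v. \<not> is_Par x \<Longrightarrow> \<exists>M. (\<forall>l. \<forall>(c,w)\<in>set (M
      l). (\<forall>x\<in>set w. \<not> is_Par x) \<and> length w < length v) \<and>
    coord_commutator U v k M"
  unfolding coord_commutator_def
proof (induction v)
  case Nil thus ?case by (intro exI[of _ "\<lambda>l. []"]) simp
next
  case (Cons x v0)
  obtain i where x: "x = Rot i" using Cons.prems by (cases x) auto
  obtain M0 where M0: "\<forall>l. \<forall>(c,w)\<in>set (M0 l). (\<forall>x\<in>set w. \<not> is_Par x) \<and>
      length w < length v0"
    "\<And>W y. smooth_on U W \<Longrightarrow> y \<in> U \<Longrightarrow> word_apply v0 (\<lambda>z. z$k * W z) y
        = y$k * word_apply v0 W y + (\<Sum>l\<in>UNIV. y$l * lc_apply (M0 l) W y)"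
    using Cons by auto
  define M where "M j = (levi i j k, v0) # lc_prefix [Rot i] (M0 j) @ lc_scale (levi i j 1) (M0 1) @ lc_scale (levi
      i j 2) (M0 2) @ lc_scale (levi i j 3) (M0 3)" for j
  have M1: "\<forall>l. \<forall>(c,w)\<in>set (M l). (\<forall>x\<in>set w. \<not> is_Par x) \<and> length w <
      length (x # v0)"
  proof (intro allI ballI)
    fix l cw assume "cw \<in> set (M l)"
    thus "case cw of (c, w) \<Rightarrow> (\<forall>x\<in>set w. \<not> is_Par x) \<and> length w < length (x # v0)"
      using M0(1) Cons.prems unfolding M_def lc_prefix_def lc_scale_def by (fastforce simp: x)
  qed
  show ?case
  proof (intro exI[of _ M] conjI[OF M1] allI impI ballI)
    fix W y assume W: "smooth_on U W" and y: "y \<in> U"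
    define E where "E l = lc_apply (M0 l) W" for l
    have sE: "smooth_on U (E l)" for l unfolding E_def by (rule smooth_on_lc_apply[OF U W])
    have sF: "smooth_on U (\<lambda>z. z$l * E l z)" for l by (rule smooth_on_mult[OF U smooth_on_coord sE])
    have sV: "smooth_on U (\<lambda>z. z$k * word_apply v0 W z)" by (rule smooth_on_mult[OF U smooth_on_coord
        smooth_on_word_apply[OF U W]])
    have "word_apply (x # v0) (\<lambda>z. z$k * W z) y = word_apply [Rot i] (\<lambda>z. z$k * word_apply v0 W z +
        (\<Sum>l\<in>UNIV. z$l * E l z)) y"
      using word_apply_cong_open[OF U M0(2)[OF W] y, where w="[Rot i]"] by (simp add: x E_def)
    also have "\<dots> = word_apply [Rot i] (\<lambda>z. z$k * word_apply v0 W z) y + word_apply [Rot i]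
        (\<lambda>z. \<Sum>l\<in>UNIV. z$l * E l z) y"
      by (rule word_apply_add[OF U sV smooth_on_sum[OF U finite_class.finite_UNIV sF] y])
    also have "word_apply [Rot i] (\<lambda>z. \<Sum>l\<in>UNIV. z$l * E l z) y = (\<Sum>l\<in>UNIV. word_apply
        [Rot i] (\<lambda>z. z$l * E l z) y)"
      by (rule word_apply_sum[OF U finite_class.finite_UNIV sF y])
    also have "\<dots> = (\<Sum>l\<in>UNIV. y$l * lc_apply (lc_prefix [Rot i] (M0 l)) W y + E l y *
        (\<Sum>j\<in>UNIV. levi i j l * y$j))"
    proof (rule sum.cong[OF refl])
      fix l
      have "word_apply [Rot i] (\<lambda>z. z$l * E l z) y = y$l * rd i (E l) y + E l y * (\<Sum>j\<in>UNIV. levi i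
          j l * y$j)"
        using rd_coord_times[OF smooth_on_differentiable_at[OF U sE y]] by simp
      moreover have "rd i (E l) y = lc_apply (lc_prefix [Rot i] (M0 l)) W y"
        using word_apply_lc_apply[OF U W y, of "[Rot i]" "M0 l"] by (simp add: E_def)
      ultimately show "word_apply [Rot i] (\<lambda>z. z$l * E l z) y = y$l * lc_apply (lc_prefix [Rot i] (M0 l)) W
          y + E l y * (\<Sum>j\<in>UNIV. levi i j l * y$j)"
        by simp
    qed
    also have "word_apply [Rot i] (\<lambda>z. z$k * word_apply v0 W z) y = y$k * word_apply (x # v0) W y +
        word_apply v0 W y * (\<Sum>j\<in>UNIV. levi i j k * y$j)"
      using rd_coord_times[OF smooth_on_differentiable_at[OF U smooth_on_word_apply[OF U W] y]] by (simp add: x)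
    finally show "word_apply (x # v0) (\<lambda>z. z$k * W z) y = y$k * word_apply (x # v0) W y +
        (\<Sum>l\<in>UNIV. y$l * lc_apply (M l) W y)"
      unfolding M_def by (simp add: lc_apply_append lc_apply_scale E_def sum_3 algebra_simps)
  qed
qed

lemma sig_pos: assumes "A > 0" "B > 0" "y \<in> ball 0 (sqrt (A / B))" shows "sig A B y > 0"
proof -
  have "norm y < sqrt (A / B)" using assms(3) by simp
  hence "norm y ^ 2 < (sqrt (A / B)) ^ 2" by (intro power_strict_mono) auto
  hence "norm y ^ 2 < A / B" using assms(1,2) by simp
  thus ?thesis using assms(1,2) by (simp add: sig_def field_simps)
qed

lemma sig_weighted_pd:
  assumes U: "open U" and H: "smooth_on U H" and y: "y \<in> U" and pos: "sig A B y > 0"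
  shows "sig A B y powr (- e) * pd k (\<lambda>w. sig A B w powr (e + 1) * H w) y
       = sig A B y * pd k H y - 2 * B * (e + 1) * y$k * H y"
proof -
  define s where "s t = sig A B (y + t *\<^sub>R unit_vec k)" for t
  define h where "h t = H (y + t *\<^sub>R unit_vec k)" for t
  have ds: "DERIV s 0 :> -2 * B * y$k" unfolding s_def using pd_has_real_derivative[OF sig_differentiable[of A B
      y], of k] pd_sig by simp
  have dh: "DERIV h 0 :> pd k H y" unfolding h_def by (rule pd_has_real_derivative[OF
      smooth_on_differentiable_at[OF U H y]])
  have s0: "s 0 = sig A B y" "h 0 = H y" by (simp_all add: s_def h_def)
  have dp: "DERIV (\<lambda>t. s t powr (e + 1)) 0 :> s 0 powr (e + 1) * (0 * ln (s 0) + (-2 * B * y$k) * (e + 1) /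
      s 0)"
    by (rule DERIV_powr[OF ds _ DERIV_const]) (use pos s0 in simp)
  have "DERIV (\<lambda>t. s t powr (e + 1) * h t) 0 :>
      s 0 powr (e + 1) * (0 * ln (s 0) + (-2 * B * y$k) * (e + 1) / s 0) * h 0 + pd k H y * s 0 powr (e + 1)"
    by (rule DERIV_mult[OF dp dh])
  hence PE: "pd k (\<lambda>w. sig A B w powr (e + 1) * H w) y =
      sig A B y powr (e + 1) * ((-2 * B * y$k) * (e + 1) / sig A B y) * H y + pd k H y * sig A B y powr (e + 1)"
    unfolding pd_def using DERIV_imp_deriv s0 by (simp add: s_def h_def)
  have QP: "sig A B y powr (- e) * sig A B y powr (e + 1) = sig A B y"
    using pos by (simp add: powr_add[symmetric])
  have "sig A B y powr (- e) * pd k (\<lambda>w. sig A B w powr (e + 1) * H w) y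
     = (sig A B y powr (- e) * sig A B y powr (e + 1)) * (((-2 * B * y$k) * (e + 1) / sig A B y) * H y)
       + (sig A B y powr (- e) * sig A B y powr (e + 1)) * pd k H y"
    unfolding PE by (simp add: algebra_simps)
  also have "\<dots> = sig A B y * pd k H y - 2 * B * (e + 1) * y$k * H y"
    unfolding QP using pos by (simp add: field_simps)
  finally show ?thesis .
qed

section \<open>Decomposition of the commutator\<close>

lemma sum_length_drop_Par: "(\<Sum>l\<in>UNIV. real (length (drop_Par l (par_word a)))) = real (mlen a)"
  by (simp add: length_drop_Par count_Par_par_word mlen_def)

lemma drop_Par_par_word: "v \<in> set (drop_Par l (par_word a)) \<Longrightarrow> (\<forall>x\<in>set v. is_Par x)
    \<and> num_Par v = mlen a - 1 \<and> num_Rot v = 0 \<and> mlen a \<ge> 1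
   \<and> count_Par (par_word a) = (\<lambda>m. count_Par v m + (if m = l then 1 else 0)) \<and> count_Rot v =
       (\<lambda>_. 0)"
  using drop_Par_props[OF par_word_all_Par, of v l a] all_Par_counts[of v] length_par_word[of a]
      count_Rot_par_word[of a] by auto

lemma drop_Par_counts: "\<forall>x\<in>set v. is_Par x \<Longrightarrow> v'' \<in> set (drop_Par j v)
    \<Longrightarrow> num_Par v'' + 1 = num_Par v \<and> num_Rot v'' = 0"
  using drop_Par_props[of v v'' j] all_Par_counts[of v] all_Par_counts[of v''] by auto

lemma levi_contraction:
  fixes W :: "3 \<Rightarrow> real" and y :: "real^3"
  shows "(\<Sum>i\<in>UNIV. levi i l k * (\<Sum>j\<in>UNIV. \<Sum>m\<in>UNIV. levi i j m * y$j * W m)) = y$l * W k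
      - y$k * W l"
  using exhaust_3[of l] exhaust_3[of k] by (auto simp: sum_3 levi_def algebra_simps)

lemma rd_expand_in_word:
  assumes U: "open U" and f: "smooth_on U f" and v: "\<forall>x\<in>set v. is_Par x" and y: "y \<in> U"
  shows "word_apply (v @ [Rot i] @ Rb) f y = (\<Sum>j\<in>UNIV. \<Sum>m\<in>UNIV. levi i j m *
      (y$j * word_apply (v @ [Par m] @ Rb) f y + (\<Sum>v''\<leftarrow>drop_Par j v. word_apply (v'' @ [Par m] @
          Rb) f y)))"
proof -
  define G where "G = word_apply Rb f"
  have G: "smooth_on U G" unfolding G_def by (rule smooth_on_word_apply[OF U f])
  have sH: "smooth_on U (\<lambda>z. z$j * pd m G z)" for j m by (rule smooth_on_mult[OF U smooth_on_coord
      smooth_on_pd[OF G]])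
  have sF: "smooth_on U (\<lambda>z. \<Sum>m\<in>UNIV. levi i j m * (z$j * pd m G z))" for j
    by (rule smooth_on_sum[OF U finite_class.finite_UNIV smooth_on_cmult[OF U sH]])
  have rdG: "rd i G = (\<lambda>z. \<Sum>j\<in>UNIV. \<Sum>m\<in>UNIV. levi i j m * (z$j * pd m G z))"
    unfolding rd_eq by (simp add: mult.assoc)
  have "word_apply (v @ [Rot i] @ Rb) f y = word_apply v (rd i G) y" by (simp add: word_apply_append G_def)
  also have "\<dots> = (\<Sum>j\<in>UNIV. word_apply v (\<lambda>z. \<Sum>m\<in>UNIV. levi i j m * (z$j * pd m G z)) y)"
    unfolding rdG by (rule word_apply_sum[OF U finite_class.finite_UNIV sF y])
  also have "\<dots> = (\<Sum>j\<in>UNIV. \<Sum>m\<in>UNIV. levi i j m * word_apply v (\<lambda>z. z$j * pd m G z) y)"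
    by (rule sum.cong[OF refl], subst word_apply_sum[OF U finite_class.finite_UNIV smooth_on_cmult[OF U sH] y],
        rule sum.cong[OF refl], rule word_apply_cmult[OF U sH y])
  also have "\<dots> = (\<Sum>j\<in>UNIV. \<Sum>m\<in>UNIV. levi i j m *
      (y$j * word_apply (v @ [Par m] @ Rb) f y + (\<Sum>v''\<leftarrow>drop_Par j v. word_apply (v'' @ [Par m] @
          Rb) f y)))"
  proof -
    have aw: "word_apply (w @ [Par m] @ Rb) f = word_apply w (pd m G)" for w m by (simp add: word_apply_append G_def)
    show ?thesis unfolding aw by (simp add: par_word_coord_mult[OF U smooth_on_pd[OF G] v y])
  qed
  finally show ?thesis .
qed

definition rot_defect :: "vf list \<Rightarrow> 3 \<Rightarrow> 3 \<Rightarrow> vf list \<Rightarrow> (real^3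
    \<Rightarrow> real) \<Rightarrow> real^3 \<Rightarrow> real" where
  "rot_defect Rb k l v f y = (\<Sum>i\<in>UNIV. levi i l k * (word_apply (v @ [Rot i] @ Rb) f y
     - (\<Sum>j\<in>UNIV. \<Sum>m\<in>UNIV. levi i j m * (\<Sum>v''\<leftarrow>drop_Par j v. word_apply (v'' @ [Par
         m] @ Rb) f y))))"

definition swap_defect :: "vf list \<Rightarrow> vf list \<Rightarrow> 3 \<Rightarrow> 3 \<Rightarrow> vf list
    \<Rightarrow> (real^3 \<Rightarrow> real) \<Rightarrow> real^3 \<Rightarrow> real" where
  "swap_defect u Rb k l v f y =
     y$l * (word_apply (v @ Rb @ [Par k]) f y - word_apply (v @ [Par k] @ Rb) f y)
     + y$k * (word_apply (v @ [Par l] @ Rb) f y - word_apply (u @ Rb) f y)"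

(* The identity y_l \<partial>_k - y_k \<partial>_l = \<Sum>_i \<epsilon>_ilk R_i, read inside a word. *)
lemma coord_rd_rearrange:
  assumes U: "open U" and f: "smooth_on U f" and v: "\<forall>x\<in>set v. is_Par x" and y: "y \<in> U"
  shows "y$l * word_apply (v @ Rb @ [Par k]) f y - y$k * word_apply (u @ Rb) f y
    = swap_defect u Rb k l v f y + rot_defect Rb k l v f y"
proof -
  define W where "W m = word_apply (v @ [Par m] @ Rb) f y" for m
  define Z where "Z j m = (\<Sum>v''\<leftarrow>drop_Par j v. word_apply (v'' @ [Par m] @ Rb) f y)" for j m
  have "rot_defect Rb k l v f y = (\<Sum>i\<in>UNIV. levi i l k * (\<Sum>j\<in>UNIV. \<Sum>m\<in>UNIV. levi i j m *
      y$j * W m))"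
    unfolding rot_defect_def rd_expand_in_word[OF U f v y] W_def
    by (simp add: sum_3 algebra_simps)
  also have "\<dots> = y$l * W k - y$k * W l" by (rule levi_contraction)
  finally show ?thesis unfolding swap_defect_def W_def by (simp add: algebra_simps)
qed

(* Removing one \<partial>_l from \<partial>^\<alpha> in all |\<alpha>| possible ways and multiplying by y_l reassembles
   |\<alpha>| y_k \<partial>^\<alpha> up to lower order terms; this is what produces the weight
       \<sigma>^{\<iota>+|\<alpha>|+1}. *)
lemma coord_weight_rearrange:
  assumes U: "open U" and f: "smooth_on U f" and y: "y \<in> U"
  shows "(\<Sum>l\<in>UNIV. y$l * (\<Sum>v\<leftarrow>drop_Par l (par_word \<alpha>). word_apply (v @ Rb @ [Par k])
      f y))
      - real (mlen \<alpha>) * (y$k * word_apply (par_word \<alpha> @ Rb) f y)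
    = (\<Sum>l\<in>UNIV. \<Sum>v\<leftarrow>drop_Par l (par_word \<alpha>). swap_defect (par_word \<alpha>) Rb k l
        v f y + rot_defect Rb k l v f y)"
proof -
  have "real (mlen \<alpha>) * (y$k * word_apply (par_word \<alpha> @ Rb) f y)
      = (\<Sum>l\<in>UNIV. \<Sum>v\<leftarrow>drop_Par l (par_word \<alpha>). y$k * word_apply (par_word \<alpha> @
          Rb) f y)"
    unfolding sum_length_drop_Par[symmetric] by (simp add: sum_list_triv sum_distrib_right)
  then have "(\<Sum>l\<in>UNIV. y$l * (\<Sum>v\<leftarrow>drop_Par l (par_word \<alpha>). word_apply (v @ Rb @ [Par
      k]) f y))
      - real (mlen \<alpha>) * (y$k * word_apply (par_word \<alpha> @ Rb) f y)
    = (\<Sum>l\<in>UNIV. \<Sum>v\<leftarrow>drop_Par l (par_word \<alpha>).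
         y$l * word_apply (v @ Rb @ [Par k]) f y - y$k * word_apply (par_word \<alpha> @ Rb) f y)"
    by (simp add: sum_list_const_mult sum_list_subtractf sum_subtractf[symmetric])
  also have "\<dots> = (\<Sum>l\<in>UNIV. \<Sum>v\<leftarrow>drop_Par l (par_word \<alpha>). swap_defect (par_word
      \<alpha>) Rb k l v f y + rot_defect Rb k l v f y)"
    using drop_Par_props[OF par_word_all_Par]
    by (intro sum.cong refl arg_cong[of _ _ sum_list] map_cong coord_rd_rearrange[OF U f _ y]) blast
  finally show ?thesis .
qed

lemma rot_word_weighted_pd:
  assumes U: "open U" and f: "smooth_on U f" and z: "z \<in> U" and pos: "\<And>z. z \<in> U \<Longrightarrow> sig
      A B z > 0"
    and M: "coord_commutator U (rot_word \<beta>) k M"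
  shows "word_apply (rot_word \<beta>) (\<lambda>z. sig A B z powr (-\<iota>) * pd k (\<lambda>w. sig A B w powr
      (\<iota>+1) * f w) z) z
    = sig A B z * word_apply (rot_word \<beta> @ [Par k]) f z
      + (-2*B*(\<iota>+1)) * (z$k * word_apply (rot_word \<beta>) f z + (\<Sum>l\<in>UNIV. z$l * lc_apply (M l) f z))"
proof -
  define Rb where "Rb = rot_word \<beta>"
  define c where "c = -2*B*(\<iota>+1)"
  have ssig: "smooth_on U (\<lambda>z. sig A B z * pd k f z)" by (rule smooth_on_mult[OF U smooth_on_sig[OF U]
      smooth_on_pd[OF f]])
  have sy: "smooth_on U (\<lambda>z. z$k * f z)" by (rule smooth_on_mult[OF U smooth_on_coord f])
  have "word_apply Rb (\<lambda>z. sig A B z powr (-\<iota>) * pd k (\<lambda>w. sig A B w powr (\<iota>+1) * f w) z) z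
      = word_apply Rb (\<lambda>z. sig A B z * pd k f z + c * (z$k * f z)) z"
  proof (rule word_apply_cong_open[OF U _ z])
    fix z' assume z': "z' \<in> U"
    show "sig A B z' powr (-\<iota>) * pd k (\<lambda>w. sig A B w powr (\<iota>+1) * f w) z'
      = sig A B z' * pd k f z' + c * (z'$k * f z')"
      using sig_weighted_pd[OF U f z' pos[OF z'], of \<iota> k] by (simp add: c_def algebra_simps)
  qed
  also have "\<dots> = word_apply Rb (\<lambda>z. sig A B z * pd k f z) z + c * word_apply Rb (\<lambda>z. z$k * f z) z"
    using word_apply_add[OF U ssig smooth_on_cmult[OF U sy] z] word_apply_cmult[OF U sy z] by simp
  also have "word_apply Rb (\<lambda>z. sig A B z * pd k f z) z = sig A B z * word_apply (Rb @ [Par k]) f z"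
    using rot_word_sig_mult[OF U smooth_on_pd[OF f] rot_word_all_Rot z] by (simp add: Rb_def word_apply_append)
  also have "word_apply Rb (\<lambda>z. z$k * f z) z = z$k * word_apply Rb f z + (\<Sum>l\<in>UNIV. z$l * lc_apply
      (M l) f z)"
    using M f z unfolding coord_commutator_def Rb_def by blast
  finally show ?thesis unfolding Rb_def c_def .
qed

definition commutator_error :: "real \<Rightarrow> real \<Rightarrow> real \<Rightarrow> (3 \<Rightarrow> nat)
    \<Rightarrow> (3 \<Rightarrow> nat) \<Rightarrow> 3 \<Rightarrow> (real^3 \<Rightarrow> real) \<Rightarrow>
    real^3 \<Rightarrow> real" where
  "commutator_error A B \<iota> \<alpha> \<beta> k f y =
     dpow \<alpha> (rpow \<beta> (\<lambda>z. sig A B z powr (-\<iota>) * pd k (\<lambda>w. sig A B w powr (\<iota>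
         + 1) * f w) z)) y
     - sig A B y powr (-\<iota> - real (mlen \<alpha>)) * pd k (\<lambda>w. sig A B w powr (\<iota> + real (mlen
         \<alpha>) + 1) * dpow \<alpha> (rpow \<beta> f) w) y"

definition err_top :: "(3 \<Rightarrow> nat) \<Rightarrow> (3 \<Rightarrow> nat) \<Rightarrow> 3 \<Rightarrow>
    (real^3 \<Rightarrow> real) \<Rightarrow> real^3 \<Rightarrow> real" where
  "err_top \<alpha> \<beta> k f y = word_apply (par_word \<alpha> @ rot_word \<beta> @ [Par k]) f y - word_apply
      ([Par k] @ par_word \<alpha> @ rot_word \<beta>) f y"

definition err_mid :: "real \<Rightarrow> real \<Rightarrow> (3 \<Rightarrow> nat) \<Rightarrow> (3 \<Rightarrow>
    nat) \<Rightarrow> 3 \<Rightarrow> (3 \<Rightarrow> lincomb) \<Rightarrow> (real^3 \<Rightarrow> real)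
    \<Rightarrow> real^3 \<Rightarrow> real" where
  "err_mid B \<iota> \<alpha> \<beta> k M f y =
     -2*B * (\<Sum>l\<in>UNIV. \<Sum>v\<leftarrow>drop_Par l (par_word \<alpha>). swap_defect (par_word \<alpha>)
         (rot_word \<beta>) k l v f y)
     + (-2*B*(\<iota>+1)) * (\<Sum>l\<in>UNIV. y$l * lc_apply (lc_prefix (par_word \<alpha>) (M l)) f y)"

definition err_low :: "real \<Rightarrow> real \<Rightarrow> (3 \<Rightarrow> nat) \<Rightarrow> (3 \<Rightarrow>
    nat) \<Rightarrow> 3 \<Rightarrow> (3 \<Rightarrow> lincomb) \<Rightarrow> (real^3 \<Rightarrow> real)
    \<Rightarrow> real^3 \<Rightarrow> real" where
  "err_low B \<iota> \<alpha> \<beta> k M f y =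
     -2*B * (\<Sum>l\<in>UNIV. \<Sum>v\<leftarrow>drop_Par l (par_word \<alpha>). rot_defect (rot_word \<beta>) k l
         v f y)
     - B * (\<Sum>l\<in>UNIV. \<Sum>v\<leftarrow>drop_Par l (par_word \<alpha>). \<Sum>v'\<leftarrow>drop_Par l v.
         word_apply (v' @ rot_word \<beta> @ [Par k]) f y)
     + (-2*B*(\<iota>+1)) * (\<Sum>v\<leftarrow>drop_Par k (par_word \<alpha>). word_apply (v @ rot_word \<beta>) f y)
     + (-2*B*(\<iota>+1)) * (\<Sum>l\<in>UNIV. \<Sum>v\<leftarrow>drop_Par l (par_word \<alpha>). lc_apply
         (lc_prefix v (M l)) f y)"

lemma commutator_error_decomposition:
  assumes U: "open U" and f: "smooth_on U f" and y: "y \<in> U" and pos: "\<And>z. z \<in> U \<Longrightarrow> sig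
      A B z > 0"
    and M: "coord_commutator U (rot_word \<beta>) k M"
  shows "commutator_error A B \<iota> \<alpha> \<beta> k f y
     = sig A B y * err_top \<alpha> \<beta> k f y + err_mid B \<iota> \<alpha> \<beta> k M f y + err_low B \<iota>
         \<alpha> \<beta> k M f y"
proof -
  define u where "u = par_word \<alpha>"
  define Rb where "Rb = rot_word \<beta>"
  define a where "a = real (mlen \<alpha>)"
  define c0 where "c0 = -2*B*(\<iota>+1)"
  define G where "G = word_apply Rb f"
  define g where "g = word_apply (u @ Rb) f"
  define X where "X = word_apply (Rb @ [Par k]) f"
  define Q where "Q l = lc_apply (M l) f" for l
  have uP: "\<forall>x\<in>set u. is_Par x" unfolding u_def by (rule par_word_all_Par)
  have sG: "smooth_on U G" unfolding G_def by (rule smooth_on_word_apply[OF U f])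
  have sg: "smooth_on U g" unfolding g_def by (rule smooth_on_word_apply[OF U f])
  have sX: "smooth_on U X" unfolding X_def by (rule smooth_on_word_apply[OF U f])
  have sQ: "smooth_on U (Q l)" for l unfolding Q_def by (rule smooth_on_lc_apply[OF U f])
  have sYG: "smooth_on U (\<lambda>z. z$k * G z)" by (rule smooth_on_mult[OF U smooth_on_coord sG])
  have sYQ: "smooth_on U (\<lambda>z. z$l * Q l z)" for l by (rule smooth_on_mult[OF U smooth_on_coord sQ])
  have sYQs: "smooth_on U (\<lambda>z. \<Sum>l\<in>UNIV. z$l * Q l z)" by (rule smooth_on_sum[OF U
      finite_class.finite_UNIV sYQ])
  have sSX: "smooth_on U (\<lambda>z. sig A B z * X z)" by (rule smooth_on_mult[OF U smooth_on_sig[OF U] sX])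
  have dpw: "dpow \<alpha> (rpow \<beta> h) = word_apply u (word_apply Rb h)" for h
    by (simp add: u_def Rb_def word_apply_par_word word_apply_rot_word)
  define SX where "SX = (\<Sum>l\<in>UNIV. y$l * (\<Sum>v\<leftarrow>drop_Par l u. word_apply v X y))"
  define S3 where "S3 = (\<Sum>l\<in>UNIV. \<Sum>v\<leftarrow>drop_Par l u. \<Sum>v'\<leftarrow>drop_Par l v.
      word_apply v' X y)"
  define SG where "SG = (\<Sum>v\<leftarrow>drop_Par k u. word_apply v G y)"
  define SQ1 where "SQ1 = (\<Sum>l\<in>UNIV. y$l * lc_apply (lc_prefix u (M l)) f y)"
  define SQ2 where "SQ2 = (\<Sum>l\<in>UNIV. \<Sum>v\<leftarrow>drop_Par l u. lc_apply (lc_prefix v (M l)) f y)"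
  define DD where "DD = (\<Sum>l\<in>UNIV. \<Sum>v\<leftarrow>drop_Par l u. swap_defect u Rb k l v f y)"
  define HH where "HH = (\<Sum>l\<in>UNIV. \<Sum>v\<leftarrow>drop_Par l u. rot_defect Rb k l v f y)"
  have "dpow \<alpha> (rpow \<beta> (\<lambda>z. sig A B z powr (-\<iota>) * pd k (\<lambda>w. sig A B w powr
      (\<iota>+1) * f w) z)) y
      = word_apply u (\<lambda>z. sig A B z * X z + c0 * (z$k * G z + (\<Sum>l\<in>UNIV. z$l * Q l z))) y"
    unfolding dpw using rot_word_weighted_pd[OF U f _ pos M]
    by (intro word_apply_cong_open[OF U _ y]) (simp add: X_def Rb_def G_def Q_def c0_def)
  also have "\<dots> = word_apply u (\<lambda>z. sig A B z * X z) y + c0 * word_apply u (\<lambda>z. z$k * G z +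
      (\<Sum>l\<in>UNIV. z$l * Q l z)) y"
    using word_apply_add[OF U sSX smooth_on_cmult[OF U smooth_on_add[OF U sYG sYQs]] y]
      word_apply_cmult[OF U smooth_on_add[OF U sYG sYQs] y] by simp
  also have "word_apply u (\<lambda>z. z$k * G z + (\<Sum>l\<in>UNIV. z$l * Q l z)) y
      = word_apply u (\<lambda>z. z$k * G z) y + (\<Sum>l\<in>UNIV. word_apply u (\<lambda>z. z$l * Q l z) y)"
    using word_apply_add[OF U sYG sYQs y]
      word_apply_sum[of U UNIV "\<lambda>l z. z$l * Q l z", OF U finite_class.finite_UNIV sYQ y] by simp
  finally have left: "dpow \<alpha> (rpow \<beta> (\<lambda>z. sig A B z powr (-\<iota>) * pd k (\<lambda>w. sig A
      B w powr (\<iota>+1) * f w) z)) y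
      = sig A B y * word_apply u X y - 2 * B * SX - B * S3 + c0 * (y$k * g y + SG + (SQ1 + SQ2))"
    using par_word_sig_mult[OF U sX uP y] par_word_coord_mult[OF U sG uP y]
      par_word_coord_mult[OF U sQ uP y] word_apply_lc_apply[OF U f y]
    by (simp add: g_def G_def Q_def SX_def S3_def SG_def SQ1_def SQ2_def word_apply_append sum.distrib)
  have right: "sig A B y powr (-\<iota> - a) * pd k (\<lambda>w. sig A B w powr (\<iota> + a + 1) * dpow \<alpha>
      (rpow \<beta> f) w) y
      = sig A B y * pd k g y - 2 * B * (\<iota> + a + 1) * y$k * g y"
    using sig_weighted_pd[OF U sg y pos[OF y], of "\<iota> + a" k]
    by (simp add: g_def dpw word_apply_append algebra_simps)
  have "SX - a * (y$k * g y) = DD + HH"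
    using coord_weight_rearrange[OF U f y, where \<alpha>=\<alpha> and Rb=Rb and k=k]
    by (simp add: SX_def DD_def HH_def u_def a_def X_def g_def word_apply_append sum.distrib[symmetric] sum_list_addf)
  then have eC: "SX = DD + HH + a * (y$k * g y)" by simp
  have e1: "err_top \<alpha> \<beta> k f y = word_apply u X y - pd k g y"
    unfolding err_top_def X_def g_def u_def Rb_def by (simp add: word_apply_append)
  have e2: "err_mid B \<iota> \<alpha> \<beta> k M f y = -2*B*DD + c0 * SQ1"
    unfolding err_mid_def DD_def SQ1_def u_def Rb_def c0_def by simp
  have e3: "err_low B \<iota> \<alpha> \<beta> k M f y = -2*B*HH - B*S3 + c0*SG + c0*SQ2"
    unfolding err_low_def HH_def S3_def SG_def SQ2_def u_def Rb_def c0_def X_def G_def by (simp add: word_apply_append)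
  show ?thesis
    unfolding commutator_error_def left right[unfolded a_def] e1 e2 e3 eC
    by (simp add: a_def c0_def algebra_simps)
qed

lemma bounded_err_top: "open U \<Longrightarrow> bounded_by U (mlen \<alpha> + 1) (mlen \<beta>) (err_top \<alpha>
    \<beta> k)"
  unfolding err_top_def[abs_def]
  by (rule word_diff_bounded) (auto simp: count_Par_par_word count_Rot_par_word count_Par_rot_word
      count_Rot_rot_word num_par_word num_rot_word counts_Par_single fun_eq_iff)

lemma bounded_swap_defect:
  assumes U: "open U" and bd: "\<And>y l. y \<in> U \<Longrightarrow> \<bar>y$l\<bar> \<le> Rad" and v: "v \<in>
      set (drop_Par l (par_word \<alpha>))"
  shows "bounded_by U (mlen \<alpha>) (mlen \<beta>) (swap_defect (par_word \<alpha>) (rot_word \<beta>) k l v)"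
proof -
  note dv = drop_Par_par_word[OF v]
  have 1: "bounded_by U (mlen \<alpha>) (mlen \<beta>) (\<lambda>f y. word_apply (v @ rot_word \<beta> @ [Par k]) f
      y - word_apply (v @ [Par k] @ rot_word \<beta>) f y)"
    by (rule word_diff_bounded[OF U]) (use dv in \<open>auto simp: count_Par_rot_word count_Rot_rot_word
        num_rot_word counts_Par_single fun_eq_iff\<close>)
  have 2: "bounded_by U (mlen \<alpha>) (mlen \<beta>) (\<lambda>f y. word_apply (v @ [Par l] @ rot_word \<beta>) f
      y - word_apply (par_word \<alpha> @ rot_word \<beta>) f y)"
    by (rule word_diff_bounded[OF U]) (use dv in \<open>auto simp: count_Par_rot_word count_Rot_rot_word
        num_rot_word counts_Par_single fun_eq_iff count_Rot_par_word\<close>)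
  show ?thesis unfolding swap_defect_def[abs_def]
    by (rule bounded_by_add[OF bounded_by_coef[OF 1 bd] bounded_by_coef[OF 2 bd]])
qed

lemma bounded_rot_defect:
  assumes U: "open U" and v: "v \<in> set (drop_Par l (par_word \<alpha>))"
  shows "bounded_by U (mlen \<alpha> - 1) (mlen \<beta> + 2) (rot_defect (rot_word \<beta>) k l v)"
proof -
  note dv = drop_Par_par_word[OF v]
  have w1: "bounded_by U (mlen \<alpha> - 1) (mlen \<beta> + 2) (word_apply (v @ [Rot i] @ rot_word \<beta>))" for i
    by (rule word_bounded[OF U]) (use dv in \<open>auto simp: num_rot_word counts_Rot_single\<close>)
  have w2: "bounded_by U (mlen \<alpha> - 1) (mlen \<beta> + 2) (word_apply (v'' @ [Par m] @ rot_word \<beta>))"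
    if "v'' \<in> set (drop_Par j v)" for j m v''
    by (rule word_bounded[OF U]) (use dv drop_Par_counts[OF _ that] in \<open>auto simp: num_rot_word
        counts_Par_single\<close>)
  show ?thesis unfolding rot_defect_def[abs_def]
    by (intro bounded_by_sum3 bounded_by_cmult bounded_by_diff w1 bounded_by_sum_list w2)
qed

lemma bounded_err_mid:
  assumes U: "open U" and bd: "\<And>y l. y \<in> U \<Longrightarrow> \<bar>y$l\<bar> \<le> Rad"
    and M: "\<forall>l. \<forall>(c,w)\<in>set (M l). (\<forall>x\<in>set w. \<not> is_Par x) \<and> length w <
        length (rot_word \<beta>)"
  shows "bounded_by U (mlen \<alpha>) (mlen \<beta>) (err_mid B \<iota> \<alpha> \<beta> k M)"
proof -
  have E: "bounded_by U (mlen \<alpha>) (mlen \<beta>) (\<lambda>f y. y$l * lc_apply (lc_prefix (par_word \<alpha>)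
      (M l)) f y)" for l
  proof (rule bounded_by_coef[OF _ bd])
    show "bounded_by U (mlen \<alpha>) (mlen \<beta>) (\<lambda>f. lc_apply (lc_prefix (par_word \<alpha>) (M l)) f)"
    proof (rule lc_apply_bounded[OF U])
      show "\<forall>(c, v)\<in>set (lc_prefix (par_word \<alpha>) (M l)). num_Par v = mlen \<alpha> \<and> num_Rot
          v < mlen \<beta>"
        using M unfolding lc_prefix_def by (fastforce simp: num_par_word all_Rot_counts length_rot_word)
    qed
  qed
  show ?thesis unfolding err_mid_def[abs_def]
    by (intro bounded_by_add bounded_by_cmult bounded_by_sum3 bounded_by_sum_list bounded_swap_defect[OF U bd] E)
qed

lemma bounded_err_low:
  assumes U: "open U"
    and M: "\<forall>l. \<forall>(c,w)\<in>set (M l). (\<forall>x\<in>set w. \<not> is_Par x) \<and> length w <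
        length (rot_word \<beta>)"
  shows "bounded_by_scaled U (mlen \<alpha>) (mlen \<alpha> - 1) (mlen \<beta> + 2) (err_low B \<iota> \<alpha>
      \<beta> k M)"
proof -
  let ?p = "mlen \<alpha> - 1" and ?r = "mlen \<beta> + 2"
  have ne: "drop_Par l (par_word \<alpha>) \<noteq> [] \<Longrightarrow> mlen \<alpha> \<ge> 1" for l
    using drop_Par_par_word[of _ l \<alpha>] by (cases "drop_Par l (par_word \<alpha>)") auto
  have S3: "bounded_by U ?p ?r (\<lambda>f y. \<Sum>v'\<leftarrow>drop_Par l v. word_apply (v' @ rot_word \<beta> @
      [Par k]) f y)" if v: "v \<in> set (drop_Par l (par_word \<alpha>))" for l v
  proof (rule bounded_by_sum_list)
    fix v' assume v': "v' \<in> set (drop_Par l v)"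
    show "bounded_by U ?p ?r (word_apply (v' @ rot_word \<beta> @ [Par k]))"
      by (rule word_bounded[OF U]) (use drop_Par_par_word[OF v] drop_Par_counts[OF _ v'] in \<open>auto simp:
          num_rot_word counts_Par_single\<close>)
  qed
  have SG: "bounded_by U ?p ?r (word_apply (v @ rot_word \<beta>))" if v: "v \<in> set (drop_Par l (par_word
      \<alpha>))" for l v
    by (rule word_bounded[OF U]) (use drop_Par_par_word[OF v] in \<open>auto simp: num_rot_word\<close>)
  have SQ: "bounded_by U ?p ?r (lc_apply (lc_prefix v (M l)))" if v: "v \<in> set (drop_Par l (par_word \<alpha>))"
      for l v
  proof (rule lc_apply_bounded[OF U])
    show "\<forall>(c, w)\<in>set (lc_prefix v (M l)). num_Par w = ?p \<and> num_Rot w < ?r"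
      using M drop_Par_par_word[OF v] unfolding lc_prefix_def by (fastforce simp: all_Rot_counts length_rot_word)
  qed
  have A1: "bounded_by_scaled U (mlen \<alpha>) ?p ?r (\<lambda>f y. \<Sum>l\<in>UNIV. \<Sum>v\<leftarrow>drop_Par
      l (par_word \<alpha>). rot_defect (rot_word \<beta>) k l v f y)"
    by (intro bounded_by_scaled_sum3 bounded_by_scaled_sum_list bounded_rot_defect[OF U] ne)
  have A2: "bounded_by_scaled U (mlen \<alpha>) ?p ?r (\<lambda>f y. \<Sum>l\<in>UNIV. \<Sum>v\<leftarrow>drop_Par
      l (par_word \<alpha>). \<Sum>v'\<leftarrow>drop_Par l v. word_apply (v' @ rot_word \<beta> @ [Par k]) f y)"
    by (intro bounded_by_scaled_sum3 bounded_by_scaled_sum_list S3 ne)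
  have A3: "bounded_by_scaled U (mlen \<alpha>) ?p ?r (\<lambda>f y. \<Sum>v\<leftarrow>drop_Par k (par_word
      \<alpha>). word_apply (v @ rot_word \<beta>) f y)"
    by (intro bounded_by_scaled_sum_list SG ne)
  have A4: "bounded_by_scaled U (mlen \<alpha>) ?p ?r (\<lambda>f y. \<Sum>l\<in>UNIV. \<Sum>v\<leftarrow>drop_Par
      l (par_word \<alpha>). lc_apply (lc_prefix v (M l)) f y)"
    by (intro bounded_by_scaled_sum3 bounded_by_scaled_sum_list SQ ne)
  show ?thesis unfolding err_low_def[abs_def]
    by (intro bounded_by_scaled_add bounded_by_scaled_diff bounded_by_scaled_cmult A1 A2 A3 A4)
qed

lemma commutator_estimate_fixed_k:
  assumes "A > 0" and "B > 0"
  shows "\<exists>C\<ge>0. \<forall>f. smooth_on (ball 0 (sqrt (A / B))) f \<longrightarrow> (\<forall>y\<in>ball 0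
      (sqrt (A / B)).
     \<bar>commutator_error A B \<iota> \<alpha> \<beta> k f y\<bar>
       \<le> C * (sig A B y * absD_sum (mlen \<alpha> + 1) (mlen \<beta>) f y + absD_sum (mlen \<alpha>) (mlen
           \<beta>) f y
               + real (mlen \<alpha>) * absD_sum (mlen \<alpha> - 1) (mlen \<beta> + 2) f y))"
proof -
  define U where "U = ball (0::real^3) (sqrt (A / B))"
  have U: "open U" unfolding U_def by simp
  have pos: "sig A B z > 0" if "z \<in> U" for z using sig_pos[OF assms] that unfolding U_def by blast
  have bd: "\<bar>y$l\<bar> \<le> sqrt (A / B)" if "y \<in> U" for y l
    using component_le_norm_cart[of y l] that unfolding U_def by simp
  obtain M where M: "\<forall>l. \<forall>(c,w)\<in>set (M l). (\<forall>x\<in>set w. \<not> is_Par x) \<and>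
      length w < length (rot_word \<beta>)"
    and Mc: "coord_commutator U (rot_word \<beta>) k M"
    using rot_word_coord_mult[OF U rot_word_all_Rot] by blast
  obtain K1 where K1: "\<And>f y. smooth_on U f \<Longrightarrow> y \<in> U \<Longrightarrow> \<bar>err_top
      \<alpha> \<beta> k f y\<bar> \<le> K1 * absD_sum (mlen \<alpha> + 1) (mlen \<beta>) f y"
    using bounded_err_top[OF U, of \<alpha> \<beta> k] unfolding bounded_by_def by blast
  obtain K2 where K2: "\<And>f y. smooth_on U f \<Longrightarrow> y \<in> U \<Longrightarrow> \<bar>err_mid B
      \<iota> \<alpha> \<beta> k M f y\<bar> \<le> K2 * absD_sum (mlen \<alpha>) (mlen \<beta>) f y"
    using bounded_err_mid[OF U bd M, of \<alpha> B \<iota> k] unfolding bounded_by_def by blast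
  obtain K3 where K3: "\<And>f y. smooth_on U f \<Longrightarrow> y \<in> U \<Longrightarrow>
      \<bar>err_low B \<iota> \<alpha> \<beta> k M f y\<bar> \<le> K3 * real (mlen \<alpha>) * absD_sum (mlen
          \<alpha> - 1) (mlen \<beta> + 2) f y"
    using bounded_err_low[OF U M, of \<alpha> B \<iota> k] unfolding bounded_by_scaled_def by blast
  have "\<bar>commutator_error A B \<iota> \<alpha> \<beta> k f y\<bar>
      \<le> (\<bar>K1\<bar> + \<bar>K2\<bar> + \<bar>K3\<bar>) * (sig A B y * absD_sum (mlen \<alpha> + 1) (mlen
          \<beta>) f y + absD_sum (mlen \<alpha>) (mlen \<beta>) f y
               + real (mlen \<alpha>) * absD_sum (mlen \<alpha> - 1) (mlen \<beta> + 2) f y)"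
    if f: "smooth_on U f" and y: "y \<in> U" for f y
  proof -
    let ?S1 = "absD_sum (mlen \<alpha> + 1) (mlen \<beta>) f y" and ?S2 = "absD_sum (mlen \<alpha>) (mlen \<beta>) f y"
      and ?S3 = "real (mlen \<alpha>) * absD_sum (mlen \<alpha> - 1) (mlen \<beta> + 2) f y"
    have nonneg: "?S1 \<ge> 0" "?S2 \<ge> 0" "?S3 \<ge> 0" "sig A B y \<ge> 0"
      using pos[OF y] by (simp_all add: absD_sum_nonneg)
    have "\<bar>err_low B \<iota> \<alpha> \<beta> k M f y\<bar> \<le> K3 * ?S3" using K3[OF f y] by (simp add:
        mult.assoc)
    then have "\<bar>err_top \<alpha> \<beta> k f y\<bar> \<le> \<bar>K1\<bar> * ?S1" "\<bar>err_mid B \<iota>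
        \<alpha> \<beta> k M f y\<bar> \<le> \<bar>K2\<bar> * ?S2"
      "\<bar>err_low B \<iota> \<alpha> \<beta> k M f y\<bar> \<le> \<bar>K3\<bar> * ?S3"
      using order_trans[OF K1[OF f y] mult_right_mono[OF abs_ge_self nonneg(1)]]
        order_trans[OF K2[OF f y] mult_right_mono[OF abs_ge_self nonneg(2)]]
        order_trans[OF _ mult_right_mono[OF abs_ge_self nonneg(3)]] by blast+
    then have "\<bar>sig A B y * err_top \<alpha> \<beta> k f y + err_mid B \<iota> \<alpha> \<beta> k M f y +
        err_low B \<iota> \<alpha> \<beta> k M f y\<bar>
        \<le> sig A B y * (\<bar>K1\<bar> * ?S1) + \<bar>K2\<bar> * ?S2 + \<bar>K3\<bar> * ?S3"
      using nonneg mult_left_mono[of "\<bar>err_top \<alpha> \<beta> k f y\<bar>" "\<bar>K1\<bar> * ?S1" "sig A B y"]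
      by (auto simp: abs_mult intro!: order_trans[OF abs_triangle_ineq] add_mono)
    also have "\<dots> \<le> (\<bar>K1\<bar> + \<bar>K2\<bar> + \<bar>K3\<bar>) * (sig A B y * ?S1 + ?S2 + ?S3)"
      using nonneg by (simp add: algebra_simps add_mono mult_nonneg_nonneg)
    finally show ?thesis
      using commutator_error_decomposition[OF U f y pos Mc] by simp
  qed
  then show ?thesis unfolding U_def by (intro exI[of _ "\<bar>K1\<bar> + \<bar>K2\<bar> + \<bar>K3\<bar>"]) auto
qed

theorem mainTheorem8:
  fixes \<iota> A B :: real and \<alpha> \<beta> :: "3 \<Rightarrow> nat"
  assumes "\<iota> > 0" and "A > 0" and "B > 0"
  shows "\<exists>C. \<forall>f k. smooth_on (ball 0 (sqrt (A / B))) f \<longrightarrow>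
           (\<forall>y\<in>ball 0 (sqrt (A / B)).
             \<bar>dpow \<alpha> (rpow \<beta> (\<lambda>z. sig A B z powr (-\<iota>) *
                  pd k (\<lambda>w. sig A B w powr (\<iota> + 1) * f w) z)) y
              - sig A B y powr (-\<iota> - real (mlen \<alpha>)) *
                  pd k (\<lambda>w. sig A B w powr (\<iota> + real (mlen \<alpha>) + 1) * dpow \<alpha> (rpow
                      \<beta> f) w) y\<bar>
             \<le> C * (\<Sum>j<mlen \<beta>. sig A B y * absD (mlen \<alpha> + 1) j f y + absD (mlen \<alpha>) j f y)
               + C * real (mlen \<alpha>) * (\<Sum>j\<le>mlen \<beta> + 1. absD (mlen \<alpha> - 1) j f y))"
proof -
  let ?U = "ball (0::real^3) (sqrt (A / B))"
  define S where "S f y = sig A B y * absD_sum (mlen \<alpha> + 1) (mlen \<beta>) f y + absD_sum (mlen \<alpha>)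
      (mlen \<beta>) f y
    + real (mlen \<alpha>) * absD_sum (mlen \<alpha> - 1) (mlen \<beta> + 2) f y" for f y
  obtain Ck where Ck: "\<And>k. Ck k \<ge> 0"
    "\<And>k f y. smooth_on ?U f \<Longrightarrow> y \<in> ?U \<Longrightarrow> \<bar>commutator_error A B \<iota>
        \<alpha> \<beta> k f y\<bar> \<le> Ck k * S f y"
    using commutator_estimate_fixed_k[OF assms(2,3), of \<iota> \<alpha> \<beta>] unfolding S_def by metis
  have "\<bar>commutator_error A B \<iota> \<alpha> \<beta> k f y\<bar> \<le> (\<Sum>k'\<in>UNIV. Ck k') * S f y"
    if "smooth_on ?U f" "y \<in> ?U" for f k y
  proof -
    have "S f y \<ge> 0"
      using sig_pos[OF assms(2,3) that(2)] by (simp add: S_def absD_sum_nonneg)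
    moreover have "Ck k \<le> (\<Sum>k'\<in>UNIV. Ck k')" by (rule member_le_sum) (auto intro: Ck(1))
    ultimately show ?thesis using Ck(2)[OF that, of k] mult_right_mono order_trans by metis
  qed
  moreover have "C * S f y = C * (\<Sum>j<mlen \<beta>. sig A B y * absD (mlen \<alpha> + 1) j f y + absD (mlen
      \<alpha>) j f y)
      + C * real (mlen \<alpha>) * (\<Sum>j\<le>mlen \<beta> + 1. absD (mlen \<alpha> - 1) j f y)" for C f y
    by (simp add: S_def absD_sum_def sum.distrib sum_distrib_left lessThan_Suc_atMost algebra_simps)
  ultimately show ?thesis unfolding commutator_error_def by (intro exI[of _ "\<Sum>k\<in>UNIV. Ck k"]) auto
qed

end
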